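(* Let $G$ be a topological group and $A$ a topological $G$-module, and suppose that for every $p\ge 0$ the augmented column complex $0\to A_c^p(G,A)\xrightarrow{\epsilon}A_{lc}^{p,0}(G,A)\xrightarrow{d_v}A_{lc}^{p,1}(G,A)\xrightarrow{d_v}\cdots$ is exact. Then the inclusion $C_c^*(G,A)\hookrightarrow C_{lc}^*(G,A)$ induces an isomorphism in cohomology.
   Context: A topological $G$-module is an abelian topological group $A$ with an action of $G$ by group automorphisms such that $G\times A\to A$ is continuous. For an identity neighbourhood $U$ of $G$ put $\Gamma_U^0:=G$ and, for $q\ge1$, $\Gamma_U^q:=\{(g_0,\dots,g_q)\in G^{q+1}\mid g_i^{-1}g_j\in U\ \forall i,j\}$. $G$ acts on maps $f\colon G^{n+1}\to A$ by $(g.f)(g_0,\dots,g_n)=g.f(g^{-1}g_0,\dots,g^{-1}g_n)$, with differential $df(g_0,\dots,g_{n+1})=\sum_i(-1)^if(g_0,\dots,\widehat{g_i},\dots,g_{n+1})$. $C_c^n(G,A)$ is the complex of continuous $G$-equivariant maps $G^{n+1}\to A$; $C_{lc}^n(G,A)$ is the complex of $G$-equivariant maps $G^{n+1}\to A$ whose restriction to $\Gamma_U^n$ is continuous for some identity neighbourhood $U$. $A_c^p(G,A):=C(G^{p+1},A)$ (all continuous maps). $A_{lc}^{p,q}(G,A)$ is the group of maps $f\colon G^{p+1}\times G^{q+1}\to A$ whose restriction to $G^{p+1}\times\Gamma_U^q$ is continuous for some identity neighbourhood $U$, with $d_vf(\vec x,y_0,\dots,y_{q+1})=(-1)^p\sum_{i=0}^{q+1}(-1)^if(\vec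 x,y_0,\dots,\widehat{y_i},\dots,y_{q+1})$, and the augmentation is $\epsilon(f)(\vec x,y_0)=f(\vec x)$. *)

theory Defs
  imports "HOL-Analysis.Analysis" "HOL-Algebra.Group"
begin

definition topological_group :: "('g, 'b) monoid_scheme \<Rightarrow> 'g topology \<Rightarrow> bool" where
  "topological_group G TG \<longleftrightarrow> group G \<and> topspace TG = carrier G
     \<and> continuous_map (prod_topology TG TG) TG (\<lambda>(x, y). x \<otimes>\<^bsub>G\<^esub> y)
     \<and> continuous_map TG TG (\<lambda>x. inv\<^bsub>G\<^esub> x)"

definition topological_ab_group :: "'a::ab_group_add topology \<Rightarrow> bool" where
  "topological_ab_group TA \<longleftrightarrow> topspace TA = UNIV
     \<and> continuous_map (prod_topology TA TA) TA (\<lambda>(x, y). x + y)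
     \<and> continuous_map TA TA uminus"

definition topological_G_module ::
  "('g, 'b) monoid_scheme \<Rightarrow> 'g topology \<Rightarrow> 'a::ab_group_add topology \<Rightarrow> ('g \<Rightarrow> 'a \<Rightarrow> 'a) \<Rightarrow> bool" where
  "topological_G_module G TG TA act \<longleftrightarrow> topological_group G TG \<and> topological_ab_group TA
     \<and> (\<forall>g\<in>carrier G. bij (act g) \<and> (\<forall>a b. act g (a + b) = act g a + act g b))
     \<and> (\<forall>a. act \<one>\<^bsub>G\<^esub> a = a)
     \<and> (\<forall>g\<in>carrier G. \<forall>h\<in>carrier G. \<forall>a. act (g \<otimes>\<^bsub>G\<^esub> h) a = act g (act h a))
     \<and> continuous_map (prod_topology TG TA) TA (\<lambda>(g, a). act g a)"

text \<open>An element of G^(n+1) is an extensional function on {..n} with values in carrier G.\<close>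

definition tuples :: "('g, 'b) monoid_scheme \<Rightarrow> nat \<Rightarrow> (nat \<Rightarrow> 'g) set" where
  "tuples G n = PiE {..n} (\<lambda>_. carrier G)"

definition tuple_top :: "'g topology \<Rightarrow> nat \<Rightarrow> (nat \<Rightarrow> 'g) topology" where
  "tuple_top TG n = product_topology (\<lambda>_. TG) {..n}"

definition identity_nbhd :: "('g, 'b) monoid_scheme \<Rightarrow> 'g topology \<Rightarrow> 'g set \<Rightarrow> bool" where
  "identity_nbhd G TG U \<longleftrightarrow> U \<subseteq> carrier G \<and> (\<exists>V. openin TG V \<and> \<one>\<^bsub>G\<^esub> \<in> V \<and> V \<subseteq> U)"

text \<open>For q = 0 this is all of G^1 = G, since the identity lies in U.\<close>
definition Gamma :: "('g, 'b) monoid_scheme \<Rightarrow> 'g set \<Rightarrow> nat \<Rightarrow> (nat \<Rightarrow> 'g) set" where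
  "Gamma G U q = {x \<in> tuples G q. \<forall>i\<le>q. \<forall>j\<le>q. inv\<^bsub>G\<^esub> (x i) \<otimes>\<^bsub>G\<^esub> x j \<in> U}"

text \<open>face n i: G^(n+2) -> G^(n+1), omitting the i-th entry.\<close>
definition face :: "nat \<Rightarrow> nat \<Rightarrow> (nat \<Rightarrow> 'g) \<Rightarrow> (nat \<Rightarrow> 'g)" where
  "face n i x = (\<lambda>j\<in>{..n}. if j < i then x j else x (Suc j))"

definition alt :: "nat \<Rightarrow> 'a::ab_group_add \<Rightarrow> 'a" where
  "alt i a = (if even i then a else - a)"

text \<open>Cochains are represented by maps that vanish outside G^(n+1).\<close>

definition supported :: "('g, 'b) monoid_scheme \<Rightarrow> nat \<Rightarrow> ((nat \<Rightarrow> 'g) \<Rightarrow> 'a::zero) \<Rightarrow> bool" where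
  "supported G n f \<longleftrightarrow> (\<forall>x. x \<notin> tuples G n \<longrightarrow> f x = 0)"

definition equivariant ::
  "('g, 'b) monoid_scheme \<Rightarrow> ('g \<Rightarrow> 'a \<Rightarrow> 'a) \<Rightarrow> nat \<Rightarrow> ((nat \<Rightarrow> 'g) \<Rightarrow> 'a) \<Rightarrow> bool" where
  "equivariant G act n f \<longleftrightarrow>
     (\<forall>g\<in>carrier G. \<forall>x\<in>tuples G n. f (\<lambda>i\<in>{..n}. g \<otimes>\<^bsub>G\<^esub> x i) = act g (f x))"

definition dhom :: "('g, 'b) monoid_scheme \<Rightarrow> nat \<Rightarrow> ((nat \<Rightarrow> 'g) \<Rightarrow> 'a::ab_group_add)
                     \<Rightarrow> ((nat \<Rightarrow> 'g) \<Rightarrow> 'a)" where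
  "dhom G n f = (\<lambda>x. if x \<in> tuples G (Suc n) then (\<Sum>i\<le>Suc n. alt i (f (face n i x))) else 0)"

definition Cc :: "('g, 'b) monoid_scheme \<Rightarrow> 'g topology \<Rightarrow> 'a::ab_group_add topology
                   \<Rightarrow> ('g \<Rightarrow> 'a \<Rightarrow> 'a) \<Rightarrow> nat \<Rightarrow> ((nat \<Rightarrow> 'g) \<Rightarrow> 'a) set" where
  "Cc G TG TA act n = {f. supported G n f \<and> equivariant G act n f
                          \<and> continuous_map (tuple_top TG n) TA f}"

definition Clc :: "('g, 'b) monoid_scheme \<Rightarrow> 'g topology \<Rightarrow> 'a::ab_group_add topology
                   \<Rightarrow> ('g \<Rightarrow> 'a \<Rightarrow> 'a) \<Rightarrow> nat \<Rightarrow> ((nat \<Rightarrow> 'g) \<Rightarrow> 'a) set" where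
  "Clc G TG TA act n = {f. supported G n f \<and> equivariant G act n f
      \<and> (\<exists>U. identity_nbhd G TG U
             \<and> continuous_map (subtopology (tuple_top TG n) (Gamma G U n)) TA f)}"

definition cocycles :: "('g, 'b) monoid_scheme \<Rightarrow> (nat \<Rightarrow> ((nat \<Rightarrow> 'g) \<Rightarrow> 'a::ab_group_add) set)
                        \<Rightarrow> nat \<Rightarrow> ((nat \<Rightarrow> 'g) \<Rightarrow> 'a) set" where
  "cocycles G K n = {f \<in> K n. dhom G n f = (\<lambda>_. 0)}"

definition coboundaries :: "('g, 'b) monoid_scheme \<Rightarrow> (nat \<Rightarrow> ((nat \<Rightarrow> 'g) \<Rightarrow> 'a::ab_group_add) set)
                        \<Rightarrow> nat \<Rightarrow> ((nat \<Rightarrow> 'g) \<Rightarrow> 'a) set" where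
  "coboundaries G K n = (case n of 0 \<Rightarrow> {\<lambda>_. 0} | Suc m \<Rightarrow> dhom G m ` K m)"

definition cls :: "('g, 'b) monoid_scheme \<Rightarrow> (nat \<Rightarrow> ((nat \<Rightarrow> 'g) \<Rightarrow> 'a::ab_group_add) set)
                   \<Rightarrow> nat \<Rightarrow> ((nat \<Rightarrow> 'g) \<Rightarrow> 'a) \<Rightarrow> ((nat \<Rightarrow> 'g) \<Rightarrow> 'a) set" where
  "cls G K n z = (\<lambda>b. (\<lambda>x. z x + b x)) ` coboundaries G K n"

definition cohom :: "('g, 'b) monoid_scheme \<Rightarrow> (nat \<Rightarrow> ((nat \<Rightarrow> 'g) \<Rightarrow> 'a::ab_group_add) set)
                     \<Rightarrow> nat \<Rightarrow> ((nat \<Rightarrow> 'g) \<Rightarrow> 'a) set set" where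
  "cohom G K n = cls G K n ` cocycles G K n"

definition induced_map :: "('g, 'b) monoid_scheme \<Rightarrow> (nat \<Rightarrow> ((nat \<Rightarrow> 'g) \<Rightarrow> 'a::ab_group_add) set)
     \<Rightarrow> (nat \<Rightarrow> ((nat \<Rightarrow> 'g) \<Rightarrow> 'a) set) \<Rightarrow> nat
     \<Rightarrow> ((nat \<Rightarrow> 'g) \<Rightarrow> 'a) set \<Rightarrow> ((nat \<Rightarrow> 'g) \<Rightarrow> 'a) set" where
  "induced_map G K L n c = cls G L n (SOME z. z \<in> c)"

definition Ac :: "('g, 'b) monoid_scheme \<Rightarrow> 'g topology \<Rightarrow> 'a::ab_group_add topology
                  \<Rightarrow> nat \<Rightarrow> ((nat \<Rightarrow> 'g) \<Rightarrow> 'a) set" where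
  "Ac G TG TA p = {f. supported G p f \<and> continuous_map (tuple_top TG p) TA f}"

definition Alc :: "('g, 'b) monoid_scheme \<Rightarrow> 'g topology \<Rightarrow> 'a::ab_group_add topology
                  \<Rightarrow> nat \<Rightarrow> nat \<Rightarrow> ((nat \<Rightarrow> 'g) \<times> (nat \<Rightarrow> 'g) \<Rightarrow> 'a) set" where
  "Alc G TG TA p q = {f. (\<forall>x y. (x, y) \<notin> tuples G p \<times> tuples G q \<longrightarrow> f (x, y) = 0)
      \<and> (\<exists>U. identity_nbhd G TG U
             \<and> continuous_map (subtopology (prod_topology (tuple_top TG p) (tuple_top TG q))
                                            (tuples G p \<times> Gamma G U q)) TA f)}"

definition dv :: "('g, 'b) monoid_scheme \<Rightarrow> nat \<Rightarrow> nat
                  \<Rightarrow> ((nat \<Rightarrow> 'g) \<times> (nat \<Rightarrow> 'g) \<Rightarrow> 'a::ab_group_add)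
                  \<Rightarrow> ((nat \<Rightarrow> 'g) \<times> (nat \<Rightarrow> 'g) \<Rightarrow> 'a)" where
  "dv G p q f = (\<lambda>(x, y). if (x, y) \<in> tuples G p \<times> tuples G (Suc q)
       then alt p (\<Sum>i\<le>Suc q. alt i (f (x, face q i y))) else 0)"

definition aug :: "('g, 'b) monoid_scheme \<Rightarrow> nat \<Rightarrow> ((nat \<Rightarrow> 'g) \<Rightarrow> 'a::ab_group_add)
                   \<Rightarrow> ((nat \<Rightarrow> 'g) \<times> (nat \<Rightarrow> 'g) \<Rightarrow> 'a)" where
  "aug G p f = (\<lambda>(x, y). if (x, y) \<in> tuples G p \<times> tuples G 0 then f x else 0)"

definition column_exact :: "('g, 'b) monoid_scheme \<Rightarrow> 'g topology \<Rightarrow> 'a::ab_group_add topology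
                            \<Rightarrow> nat \<Rightarrow> bool" where
  "column_exact G TG TA p \<longleftrightarrow>
     (\<forall>f\<in>Ac G TG TA p. aug G p f = (\<lambda>_. 0) \<longrightarrow> f = (\<lambda>_. 0))
     \<and> {f \<in> Alc G TG TA p 0. dv G p 0 f = (\<lambda>_. 0)} = aug G p ` Ac G TG TA p
     \<and> (\<forall>q. {f \<in> Alc G TG TA p (Suc q). dv G p (Suc q) f = (\<lambda>_. 0)}
             = dv G p q ` Alc G TG TA p q)"

end

theory Submission
  imports Defs
begin

text \<open>Consider the double complex E^{p,q} of G-equivariant cochains in A_lc^{p,q}(G, A), with one
  differential acting on the first and one on the second group of variables. Its rows, augmented
  by C_lc, are exact: prepending the first entry of the second group of variables is a contracting
  homotopy. Its columns, augmented by C_c, are exact: this is the hypothesis, transported to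
  equivariant cochains by the averaging F(x, y) \<mapsto> x_0 F(x_0^{-1} x, x_0^{-1} y). The usual
  zigzag argument for a double complex with exact augmented rows and columns then identifies the
  cohomology of C_lc with that of C_c. Cutting a C_c-cocycle into its restrictions along the
  splittings G^{m+2} = G^{k+1} \<times> G^{m-k+1} gives a zigzag from the cocycle to itself, which shows
  that this identification is the map induced by the inclusion.\<close>

lemma alt_0 [simp]: "alt 0 v = v"
  by (simp add: alt_def)

lemma alt_zero [simp]: "alt i (0::'a::ab_group_add) = 0"
  by (simp add: alt_def)

lemma alt_Suc: "alt (Suc i) v = - alt i v"
  by (simp add: alt_def)

lemma alt_alt: "alt i (alt j v) = alt (i + j) v"
  by (auto simp: alt_def)

lemma alt_alt_self [simp]: "alt i (alt i v) = v"
  by (auto simp: alt_def)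

lemma alt_diff: "alt i (a - b) = alt i a - alt i (b::'a::ab_group_add)"
  by (simp add: alt_def)

lemma alt_minus: "alt i (- a) = - alt i (a::'a::ab_group_add)"
  by (simp add: alt_def)

lemma alt_sum: "alt i (sum f S) = (\<Sum>s\<in>S. alt i (f s))"
  by (simp add: alt_def sum_negf)

lemma alternating_double_sum_eq_0:
  fixes T :: "nat \<Rightarrow> nat \<Rightarrow> 'a::ab_group_add"
  assumes T: "\<And>i j. i \<le> j \<Longrightarrow> j \<le> Suc n \<Longrightarrow> T i j = T (Suc j) i"
  shows "(\<Sum>i\<le>Suc (Suc n). alt i (\<Sum>j\<le>Suc n. alt j (T i j))) = 0"
proof -
  define g where "g = (\<lambda>(i, j). alt (i + j) (T i j))"
  define A where "A = {(i, j). i \<le> Suc (Suc n) \<and> j < i}"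
  define B where "B = {(i, j). j \<le> Suc n \<and> i \<le> j}"
  have "(\<Sum>i\<le>Suc (Suc n). alt i (\<Sum>j\<le>Suc n. alt j (T i j))) = (\<Sum>i\<le>Suc (Suc n). \<Sum>j\<le>Suc n. g (i, j))"
    by (simp only: alt_sum alt_alt g_def case_prod_conv)
  also have "\<dots> = sum g ({..Suc (Suc n)} \<times> {..Suc n})"
    by (simp del: sum.atMost_Suc add: sum.cartesian_product)
  also have "{..Suc (Suc n)} \<times> {..Suc n} = A \<union> B"
    by (auto simp: A_def B_def)
  also have "sum g (A \<union> B) = sum g A + sum g B"
    by (rule sum.union_disjoint) (auto simp: A_def B_def intro: finite_subset[of _ "{..Suc (Suc n)} \<times> {..Suc n}"])
  also have "sum g B = sum (\<lambda>t. - g t) A"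
    \<comment> \<open>the simplicial identity pairs the term (i, j) with i \<le> j with the term (j + 1, i) of opposite sign\<close>
    by (rule sum.reindex_bij_witness[where i = "\<lambda>(i, j). (j, i - 1)" and j = "\<lambda>(i, j). (Suc j, i)"])
       (auto simp: A_def B_def g_def T alt_Suc add.commute)
  finally show ?thesis
    by (simp add: sum_negf)
qed

lemma sum_atMost_add_Suc:
  "(\<Sum>i\<le>a + Suc b. f i) = (\<Sum>i\<le>a. f i) + (\<Sum>j\<le>b. f (Suc a + j))"
  by (induction b) (simp_all add: add.assoc)

definition additive_subgroup :: "('x \<Rightarrow> 'a::ab_group_add) set \<Rightarrow> bool" where
  "additive_subgroup S \<longleftrightarrow> (\<lambda>_. 0) \<in> S \<and> (\<forall>f\<in>S. \<forall>g\<in>S. (\<lambda>x. f x - g x) \<in> S)"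

lemma additive_subgroup_zero: "additive_subgroup S \<Longrightarrow> (\<lambda>_. 0) \<in> S"
  by (simp add: additive_subgroup_def)

lemma additive_subgroup_diff:
  "additive_subgroup S \<Longrightarrow> f \<in> S \<Longrightarrow> g \<in> S \<Longrightarrow> (\<lambda>x. f x - g x) \<in> S"
  by (simp add: additive_subgroup_def)

lemma additive_subgroup_minus: "additive_subgroup S \<Longrightarrow> f \<in> S \<Longrightarrow> (\<lambda>x. - f x) \<in> S"
  using additive_subgroup_diff[OF _ additive_subgroup_zero] by fastforce

lemma additive_subgroup_alt: "additive_subgroup S \<Longrightarrow> f \<in> S \<Longrightarrow> (\<lambda>x. alt i (f x)) \<in> S"
  by (cases "even i") (simp_all add: alt_def additive_subgroup_minus)

definition diff_preserving :: "(('x \<Rightarrow> 'a::ab_group_add) \<Rightarrow> 'y \<Rightarrow> 'b::ab_group_add) \<Rightarrow> bool" where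
  "diff_preserving T \<longleftrightarrow> (\<forall>f g. T (\<lambda>x. f x - g x) = (\<lambda>y. T f y - T g y))"

lemma diff_preservingD: "diff_preserving T \<Longrightarrow> T (\<lambda>x. f x - g x) = (\<lambda>y. T f y - T g y)"
  by (simp add: diff_preserving_def)

lemma diff_preserving_zero: "diff_preserving T \<Longrightarrow> T (\<lambda>_. 0) = (\<lambda>_. 0)"
  using diff_preservingD[of T "\<lambda>_. 0" "\<lambda>_. 0"] by simp

lemma diff_preserving_minus: "diff_preserving T \<Longrightarrow> T (\<lambda>x. - f x) = (\<lambda>y. - T f y)"
  using diff_preservingD[of T "\<lambda>_. 0" f] by (simp add: diff_preserving_zero)

lemma diff_preserving_alt: "diff_preserving T \<Longrightarrow> T (\<lambda>x. alt i (f x)) = (\<lambda>y. alt i (T f y))"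
  by (auto simp: alt_def diff_preserving_minus)

lemma additive_subgroup_image:
  "additive_subgroup S \<Longrightarrow> diff_preserving T \<Longrightarrow> additive_subgroup (T ` S)"
  unfolding additive_subgroup_def
  by (auto simp: diff_preservingD[symmetric] intro!: image_eqI[where x = "\<lambda>_. 0"] diff_preserving_zero[symmetric])

lemma coset_subset:
  assumes S: "additive_subgroup S" and z: "(\<lambda>x. z x - z' x) \<in> S"
  shows "(\<lambda>b x. z x + b x) ` S \<subseteq> (\<lambda>b x. z' x + b x) ` S"
proof
  fix f assume "f \<in> (\<lambda>b x. z x + b x) ` S"
  then obtain b where b: "b \<in> S" "f = (\<lambda>x. z x + b x)" by blast
  have "(\<lambda>x. b x - - (z x - z' x)) \<in> S"
    using additive_subgroup_diff[OF S b(1) additive_subgroup_minus[OF S z]] .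
  then show "f \<in> (\<lambda>b x. z' x + b x) ` S"
    using b(2) by (intro image_eqI[where x = "\<lambda>x. b x - - (z x - z' x)"]) (simp_all add: fun_eq_iff)
qed

lemma coset_eq_iff:
  assumes S: "additive_subgroup S"
  shows "(\<lambda>b x. z x + b x) ` S = (\<lambda>b x. z' x + b x) ` S \<longleftrightarrow> (\<lambda>x. z x - z' x) \<in> S"
proof
  assume eq: "(\<lambda>b x. z x + b x) ` S = (\<lambda>b x. z' x + b x) ` S"
  have "z \<in> (\<lambda>b x. z x + b x) ` S"
    by (rule image_eqI[where x = "\<lambda>_. 0"]) (simp_all add: additive_subgroup_zero[OF S])
  then obtain b where "b \<in> S" "z = (\<lambda>x. z' x + b x)"
    using eq by auto
  then show "(\<lambda>x. z x - z' x) \<in> S"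
    by simp
next
  assume z: "(\<lambda>x. z x - z' x) \<in> S"
  have "(\<lambda>x. z' x - z x) \<in> S"
    using additive_subgroup_minus[OF S z] by simp
  then show "(\<lambda>b x. z x + b x) ` S = (\<lambda>b x. z' x + b x) ` S"
    using coset_subset[OF S] z by blast
qed

lemma diff_preserving_dhom: "diff_preserving (dhom G n)"
  by (simp add: diff_preserving_def dhom_def fun_eq_iff sum_subtractf alt_diff)

lemma additive_subgroup_coboundaries:
  "(\<And>m. additive_subgroup (K m)) \<Longrightarrow> additive_subgroup (coboundaries G K n)"
  by (cases n) (simp_all add: coboundaries_def additive_subgroup_def[of "{_}"] additive_subgroup_image diff_preserving_dhom)

lemma cls_eq_iff:
  "(\<And>m. additive_subgroup (K m))
   \<Longrightarrow> cls G K n z = cls G K n z' \<longleftrightarrow> (\<lambda>x. z x - z' x) \<in> coboundaries G K n"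
  unfolding cls_def by (rule coset_eq_iff[OF additive_subgroup_coboundaries])

lemma induced_map_cls:
  assumes KL: "\<And>m. K m \<subseteq> L m"
    and K: "\<And>m. additive_subgroup (K m)" and L: "\<And>m. additive_subgroup (L m)"
  shows "induced_map G K L n (cls G K n z) = cls G L n z"
proof -
  have "z \<in> cls G K n z"
    unfolding cls_def
    by (rule image_eqI[where x = "\<lambda>_. 0"]) (simp_all add: additive_subgroup_zero additive_subgroup_coboundaries K)
  then have "(SOME z'. z' \<in> cls G K n z) \<in> cls G K n z"
    by (rule someI[where P = "\<lambda>z'. z' \<in> cls G K n z"])
  then obtain b where b: "b \<in> coboundaries G K n" "(SOME z'. z' \<in> cls G K n z) = (\<lambda>x. z x + b x)"
    by (auto simp: cls_def)
  have "coboundaries G K n \<subseteq> coboundaries G L n"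
    using KL by (cases n) (auto simp: coboundaries_def)
  then show ?thesis
    using b by (auto simp: induced_map_def cls_eq_iff[OF L])
qed

lemma bij_betw_induced_map:
  assumes KL: "\<And>m. K m \<subseteq> L m"
    and K: "\<And>m. additive_subgroup (K m)" and L: "\<And>m. additive_subgroup (L m)"
    and inj: "\<And>z. z \<in> cocycles G K n \<Longrightarrow> z \<in> coboundaries G L n \<Longrightarrow> z \<in> coboundaries G K n"
    and surj: "\<And>z. z \<in> cocycles G L n \<Longrightarrow> \<exists>w\<in>cocycles G K n. (\<lambda>x. z x - w x) \<in> coboundaries G L n"
  shows "bij_betw (induced_map G K L n) (cohom G K n) (cohom G L n)"
  unfolding bij_betw_def
proof
  show "inj_on (induced_map G K L n) (cohom G K n)"
  proof (rule inj_onI, clarsimp simp: cohom_def induced_map_cls[OF KL K L])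
    fix z1 z2 assume z: "z1 \<in> cocycles G K n" "z2 \<in> cocycles G K n"
      and eq: "cls G L n z1 = cls G L n z2"
    have "(\<lambda>x. z1 x - z2 x) \<in> cocycles G K n"
      using z additive_subgroup_diff[OF K]
      by (simp add: cocycles_def diff_preservingD[OF diff_preserving_dhom])
    then show "cls G K n z1 = cls G K n z2"
      using inj eq by (simp add: cls_eq_iff[OF K] cls_eq_iff[OF L])
  qed
  show "induced_map G K L n ` cohom G K n = cohom G L n"
  proof (intro equalityI subsetI)
    fix c assume "c \<in> induced_map G K L n ` cohom G K n"
    then obtain z where "z \<in> cocycles G K n" "c = cls G L n z"
      by (auto simp: cohom_def induced_map_cls[OF KL K L])
    moreover have "cocycles G K n \<subseteq> cocycles G L n"
      using KL by (auto simp: cocycles_def)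
    ultimately show "c \<in> cohom G L n"
      by (auto simp: cohom_def)
  next
    fix c assume "c \<in> cohom G L n"
    then obtain z where z: "z \<in> cocycles G L n" "c = cls G L n z"
      by (auto simp: cohom_def)
    obtain w where w: "w \<in> cocycles G K n" "cls G L n z = cls G L n w"
      using surj[OF z(1)] by (auto simp: cls_eq_iff[OF L])
    have "c = induced_map G K L n (cls G K n w)"
      using z(2) w(2) by (simp add: induced_map_cls[OF KL K L])
    then show "c \<in> induced_map G K L n ` cohom G K n"
      using w(1) by (auto simp: cohom_def)
  qed
qed

section \<open>Double complexes with exact augmented rows and columns\<close>

locale augmented_double_complex =
  fixes E :: "nat \<Rightarrow> nat \<Rightarrow> ('x \<Rightarrow> 'a::ab_group_add) set"
    and dH dV :: "nat \<Rightarrow> nat \<Rightarrow> ('x \<Rightarrow> 'a) \<Rightarrow> 'x \<Rightarrow> 'a"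
    and L C :: "nat \<Rightarrow> ('y \<Rightarrow> 'a) set"
    and d :: "nat \<Rightarrow> ('y \<Rightarrow> 'a) \<Rightarrow> 'y \<Rightarrow> 'a"
    and row_aug col_aug :: "nat \<Rightarrow> ('y \<Rightarrow> 'a) \<Rightarrow> 'x \<Rightarrow> 'a"
  assumes E_subgroup: "additive_subgroup (E p q)"
    and L_subgroup: "additive_subgroup (L n)"
    and C_subgroup: "additive_subgroup (C n)"
    and dH_diff_preserving: "diff_preserving (dH p q)"
    and dV_diff_preserving: "diff_preserving (dV p q)"
    and row_aug_diff_preserving: "diff_preserving (row_aug q)"
    and col_aug_diff_preserving: "diff_preserving (col_aug p)"
    and dH_closed: "F \<in> E p q \<Longrightarrow> dH p q F \<in> E (Suc p) q"
    and dV_closed: "F \<in> E p q \<Longrightarrow> dV p q F \<in> E p (Suc q)"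
    and d_L_closed: "u \<in> L n \<Longrightarrow> d n u \<in> L (Suc n)"
    and d_C_closed: "f \<in> C n \<Longrightarrow> d n f \<in> C (Suc n)"
    and row_aug_closed: "u \<in> L q \<Longrightarrow> row_aug q u \<in> E 0 q"
    and col_aug_closed: "f \<in> C p \<Longrightarrow> col_aug p f \<in> E p 0"
    and dH_dH: "dH (Suc p) q (dH p q F) = (\<lambda>_. 0)"
    and dV_dV: "dV p (Suc q) (dV p q F) = (\<lambda>_. 0)"
    and dV_dH: "dV (Suc p) q (dH p q F) = dH p (Suc q) (dV p q F)"
    and dV_row_aug: "dV 0 q (row_aug q u) = row_aug (Suc q) (d q u)"
    and dH_row_aug: "dH 0 q (row_aug q u) = (\<lambda>_. 0)"
    and dH_col_aug: "dH p 0 (col_aug p f) = col_aug (Suc p) (d p f)"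
    and dV_col_aug: "dV p 0 (col_aug p f) = (\<lambda>_. 0)"
    and row_aug_inj: "u \<in> L q \<Longrightarrow> row_aug q u = (\<lambda>_. 0) \<Longrightarrow> u = (\<lambda>_. 0)"
    and col_aug_inj: "f \<in> C p \<Longrightarrow> col_aug p f = (\<lambda>_. 0) \<Longrightarrow> f = (\<lambda>_. 0)"
    and row_exact_0: "F \<in> E 0 q \<Longrightarrow> dH 0 q F = (\<lambda>_. 0) \<Longrightarrow> \<exists>u\<in>L q. F = row_aug q u"
    and row_exact: "F \<in> E (Suc p) q \<Longrightarrow> dH (Suc p) q F = (\<lambda>_. 0) \<Longrightarrow> \<exists>H\<in>E p q. F = dH p q H"
    and col_exact_0: "F \<in> E p 0 \<Longrightarrow> dV p 0 F = (\<lambda>_. 0) \<Longrightarrow> \<exists>f\<in>C p. F = col_aug p f"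
    and col_exact: "F \<in> E p (Suc q) \<Longrightarrow> dV p (Suc q) F = (\<lambda>_. 0) \<Longrightarrow> \<exists>H\<in>E p q. F = dV p q H"
begin

lemmas dH_diff = diff_preservingD[OF dH_diff_preserving]
  and dV_diff = diff_preservingD[OF dV_diff_preserving]
  and row_aug_diff = diff_preservingD[OF row_aug_diff_preserving]
  and col_aug_diff = diff_preservingD[OF col_aug_diff_preserving]

definition staircase :: "nat \<Rightarrow> nat \<Rightarrow> ('y \<Rightarrow> 'a) \<Rightarrow> (nat \<Rightarrow> 'x \<Rightarrow> 'a) \<Rightarrow> bool" where
  "staircase m k z a \<longleftrightarrow> (\<forall>j\<le>k. a j \<in> E j (m - j)) \<and> row_aug (Suc m) z = dV 0 m (a 0)
     \<and> (\<forall>j<k. dV (Suc j) (m - Suc j) (a (Suc j)) = dH j (m - j) (a j))"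

definition zigzag :: "nat \<Rightarrow> ('y \<Rightarrow> 'a) \<Rightarrow> ('y \<Rightarrow> 'a) \<Rightarrow> (nat \<Rightarrow> 'x \<Rightarrow> 'a) \<Rightarrow> bool" where
  "zigzag m z w a \<longleftrightarrow> staircase m m z a \<and> col_aug (Suc m) w = dH m 0 (a m)"

lemma staircase_in_E: "staircase m k z a \<Longrightarrow> j \<le> k \<Longrightarrow> a j \<in> E j (m - j)"
  by (simp add: staircase_def)

lemma zigzag_in_E: "zigzag m z w a \<Longrightarrow> j \<le> m \<Longrightarrow> a j \<in> E j (m - j)"
  by (simp add: zigzag_def staircase_def)

lemma zigzag_step:
  "zigzag m z w a \<Longrightarrow> j < m \<Longrightarrow> dV (Suc j) (m - Suc j) (a (Suc j)) = dH j (m - j) (a j)"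
  by (simp add: zigzag_def staircase_def)

lemma zigzag_diff:
  assumes "zigzag m z w a" "zigzag m z' w' a'"
  shows "zigzag m (\<lambda>t. z t - z' t) (\<lambda>t. w t - w' t) (\<lambda>k t. a k t - a' k t)"
  using assms unfolding zigzag_def staircase_def
  by (simp add: additive_subgroup_diff[OF E_subgroup] row_aug_diff col_aug_diff dV_diff dH_diff)

lemma zigzag_alt:
  assumes "zigzag m z w a"
  shows "zigzag m (\<lambda>t. alt i (z t)) (\<lambda>t. alt i (w t)) (\<lambda>k t. alt i (a k t))"
  using assms unfolding zigzag_def staircase_def
  by (simp add: additive_subgroup_alt[OF E_subgroup] diff_preserving_alt
      row_aug_diff_preserving col_aug_diff_preserving dV_diff_preserving dH_diff_preserving)

lemma dV_dH_staircase:
  assumes a: "staircase m k z a" and k: "k \<le> m"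
  shows "dV (Suc k) (m - k) (dH k (m - k) (a k)) = (\<lambda>_. 0)"
proof -
  have "dV (Suc k) (m - k) (dH k (m - k) (a k)) = dH k (Suc (m - k)) (dV k (m - k) (a k))"
    by (rule dV_dH)
  also have "\<dots> = (\<lambda>_. 0)"
  proof (cases k)
    case 0
    have "dV 0 m (a 0) = row_aug (Suc m) z"
      using a by (simp add: staircase_def)
    then show ?thesis
      using 0 by (simp add: dH_row_aug)
  next
    case (Suc j)
    then have "dV k (m - k) (a k) = dH j (m - j) (a j)" and "m - j = Suc (m - k)"
      using a k by (auto simp: staircase_def)
    then show ?thesis
      using Suc by (simp add: dH_dH)
  qed
  finally show ?thesis .
qed

lemma staircase_extend:
  assumes a: "staircase m k z a" and k: "k < m"
  obtains H where "staircase m (Suc k) z (a(Suc k := H))"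
proof -
  have mk: "m - k = Suc (m - Suc k)"
    using k by arith
  have "dH k (m - k) (a k) \<in> E (Suc k) (Suc (m - Suc k))"
    using dH_closed[OF staircase_in_E[OF a order_refl]] mk by simp
  moreover have "dV (Suc k) (Suc (m - Suc k)) (dH k (m - k) (a k)) = (\<lambda>_. 0)"
    using dV_dH_staircase[OF a] k mk by simp
  ultimately obtain H where H: "H \<in> E (Suc k) (m - Suc k)" "dH k (m - k) (a k) = dV (Suc k) (m - Suc k) H"
    using col_exact by blast
  have "staircase m (Suc k) z (a(Suc k := H))"
    using a H by (auto simp: staircase_def less_Suc_eq le_Suc_eq)
  then show thesis ..
qed

lemma exists_staircase:
  assumes z: "z \<in> L (Suc m)" and dz: "d (Suc m) z = (\<lambda>_. 0)" and k: "k \<le> m"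
  shows "\<exists>a. staircase m k z a"
  using k
proof (induction k)
  case 0
  have "row_aug (Suc m) z \<in> E 0 (Suc m)"
    by (rule row_aug_closed[OF z])
  moreover have "dV 0 (Suc m) (row_aug (Suc m) z) = (\<lambda>_. 0)"
    by (simp add: dV_row_aug dz diff_preserving_zero[OF row_aug_diff_preserving])
  ultimately obtain H where "H \<in> E 0 m" "row_aug (Suc m) z = dV 0 m H"
    using col_exact by blast
  then show ?case
    by (auto simp: staircase_def intro!: exI[of _ "\<lambda>_. H"])
next
  case (Suc k)
  then show ?case
    by (metis Suc_le_lessD less_imp_le_nat staircase_extend)
qed

lemma exists_zigzag:
  assumes z: "z \<in> L (Suc m)" and dz: "d (Suc m) z = (\<lambda>_. 0)"
  obtains w a where "w \<in> C (Suc m)" "d (Suc m) w = (\<lambda>_. 0)" "zigzag m z w a"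
proof -
  obtain a where a: "staircase m m z a"
    using exists_staircase[OF z dz] by blast
  have "dH m 0 (a m) \<in> E (Suc m) 0"
    using dH_closed[OF staircase_in_E[OF a order_refl]] by simp
  moreover have "dV (Suc m) 0 (dH m 0 (a m)) = (\<lambda>_. 0)"
    using dV_dH_staircase[OF a] by simp
  ultimately obtain w where w: "w \<in> C (Suc m)" "dH m 0 (a m) = col_aug (Suc m) w"
    using col_exact_0 by blast
  have "col_aug (Suc (Suc m)) (d (Suc m) w) = (\<lambda>_. 0)"
    by (simp add: w(2)[symmetric] dH_dH flip: dH_col_aug)
  then have "d (Suc m) w = (\<lambda>_. 0)"
    by (rule col_aug_inj[OF d_C_closed[OF w(1)]])
  moreover have "zigzag m z w a"
    using a w(2) by (simp add: zigzag_def)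
  ultimately show thesis
    using that w(1) by blast
qed

text \<open>If z bounds in L, each entry of the zigzag is a column cocycle modulo a row cocycle
  (induction along the zigzag, starting at row_aug z).\<close>

lemma zigzag_L_coboundary_correction:
  assumes ch: "zigzag m z w a" and u: "u \<in> L m" and zu: "z = d m u" and k: "k \<le> m"
  shows "\<exists>Y\<in>E k (m - k). dV k (m - k) (\<lambda>t. a k t - Y t) = (\<lambda>_. 0) \<and> dH k (m - k) Y = (\<lambda>_. 0)"
  using k
proof (induction k)
  case 0
  have "dV 0 m (\<lambda>t. a 0 t - row_aug m u t) = (\<lambda>_. 0)"
    using ch zu by (simp add: zigzag_def staircase_def dV_diff flip: dV_row_aug)
  then show ?case
    using row_aug_closed[OF u] by (auto simp: dH_row_aug)
next
  case (Suc k)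
  then obtain Y where Y: "Y \<in> E k (m - k)" "dV k (m - k) (\<lambda>t. a k t - Y t) = (\<lambda>_. 0)"
    "dH k (m - k) Y = (\<lambda>_. 0)"
    by auto
  have mk: "m - k = Suc (m - Suc k)"
    using Suc.prems by arith
  have a: "a k \<in> E k (m - k)" "dV (Suc k) (m - Suc k) (a (Suc k)) = dH k (m - k) (a k)"
    using zigzag_in_E[OF ch] zigzag_step[OF ch] Suc.prems by simp_all
  have "(\<lambda>t. a k t - Y t) \<in> E k (Suc (m - Suc k))"
    using additive_subgroup_diff[OF E_subgroup a(1) Y(1)] mk by simp
  then obtain b where b: "b \<in> E k (m - Suc k)" "(\<lambda>t. a k t - Y t) = dV k (m - Suc k) b"
    using col_exact Y(2) mk by fastforce
  have "dV (Suc k) (m - Suc k) (\<lambda>t. a (Suc k) t - dH k (m - Suc k) b t)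
      = (\<lambda>t. dH k (m - k) (a k) t - dH k (m - k) (dV k (m - Suc k) b) t)"
    using a(2) mk by (simp add: dV_diff dV_dH)
  also have "\<dots> = dH k (m - k) Y"
    by (simp add: dH_diff flip: b(2))
  finally show ?case
    using Y(3) dH_closed[OF b(1)] by (auto simp: dH_dH)
qed

lemma zigzag_L_coboundary_imp_C_coboundary:
  assumes ch: "zigzag m z w a" and w: "w \<in> C (Suc m)" and u: "u \<in> L m" and zu: "z = d m u"
  shows "\<exists>c\<in>C m. w = d m c"
proof -
  obtain Y where Y: "Y \<in> E m 0" "dV m 0 (\<lambda>t. a m t - Y t) = (\<lambda>_. 0)" "dH m 0 Y = (\<lambda>_. 0)"
    using zigzag_L_coboundary_correction[OF ch u zu, of m] by auto
  have "(\<lambda>t. a m t - Y t) \<in> E m 0"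
    using additive_subgroup_diff[OF E_subgroup _ Y(1)] zigzag_in_E[OF ch, of m] by simp
  then obtain c where c: "c \<in> C m" "(\<lambda>t. a m t - Y t) = col_aug m c"
    using col_exact_0 Y(2) by blast
  have "col_aug (Suc m) (d m c) = col_aug (Suc m) w"
    using ch Y(3) by (simp add: zigzag_def dH_diff c(2)[symmetric] flip: dH_col_aug)
  then have "col_aug (Suc m) (\<lambda>t. w t - d m c t) = (\<lambda>_. 0)"
    by (simp add: col_aug_diff)
  then have "(\<lambda>t. w t - d m c t) = (\<lambda>_. 0)"
    by (rule col_aug_inj[OF additive_subgroup_diff[OF C_subgroup w d_C_closed[OF c(1)]]])
  then show ?thesis
    using c(1) by (auto simp: fun_eq_iff)
qed

text \<open>Dually, if w bounds in C, each entry is a row cocycle modulo a column cocycle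
  (induction along the zigzag, starting at col_aug w).\<close>

lemma zigzag_C_coboundary_correction:
  assumes ch: "zigzag m z w a" and c: "c \<in> C m" and wc: "w = d m c" and i: "i \<le> m"
  shows "\<exists>Y\<in>E (m - i) i. dH (m - i) i (\<lambda>t. a (m - i) t - Y t) = (\<lambda>_. 0) \<and> dV (m - i) i Y = (\<lambda>_. 0)"
  using i
proof (induction i)
  case 0
  have "dH m 0 (\<lambda>t. a m t - col_aug m c t) = (\<lambda>_. 0)"
    using ch wc by (simp add: zigzag_def dH_diff flip: dH_col_aug)
  then show ?case
    using col_aug_closed[OF c] by (auto simp: dV_col_aug)
next
  case (Suc i)
  define k where "k = m - Suc i"
  have k: "m - i = Suc k" "m - k = Suc i" "k < m"
    using Suc.prems by (auto simp: k_def)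
  obtain Y where Y: "Y \<in> E (Suc k) i" "dH (Suc k) i (\<lambda>t. a (Suc k) t - Y t) = (\<lambda>_. 0)"
    "dV (Suc k) i Y = (\<lambda>_. 0)"
    using Suc k by auto
  have "m - Suc k = i"
    using k by arith
  then have a: "a (Suc k) \<in> E (Suc k) i" "dV (Suc k) i (a (Suc k)) = dH k (Suc i) (a k)"
    using zigzag_in_E[OF ch, of "Suc k"] zigzag_step[OF ch k(3)] k by simp_all
  obtain b where b: "b \<in> E k i" "(\<lambda>t. a (Suc k) t - Y t) = dH k i b"
    using row_exact[OF additive_subgroup_diff[OF E_subgroup a(1) Y(1)] Y(2)] by blast
  have "dH k (Suc i) (\<lambda>t. a k t - dV k i b t)
      = (\<lambda>t. dV (Suc k) i (a (Suc k)) t - dV (Suc k) i (dH k i b) t)"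
    using a(2) by (simp add: dH_diff dV_dH)
  also have "\<dots> = dV (Suc k) i Y"
    by (simp add: dV_diff flip: b(2))
  finally show ?case
    using Y(3) dV_closed[OF b(1)] k by (auto simp: dV_dV k_def)
qed

lemma zigzag_C_coboundary_imp_L_coboundary:
  assumes ch: "zigzag m z w a" and z: "z \<in> L (Suc m)" and c: "c \<in> C m" and wc: "w = d m c"
  shows "\<exists>u\<in>L m. z = d m u"
proof -
  obtain Y where Y: "Y \<in> E 0 m" "dH 0 m (\<lambda>t. a 0 t - Y t) = (\<lambda>_. 0)" "dV 0 m Y = (\<lambda>_. 0)"
    using zigzag_C_coboundary_correction[OF ch c wc, of m] by auto
  have "(\<lambda>t. a 0 t - Y t) \<in> E 0 m"
    using additive_subgroup_diff[OF E_subgroup _ Y(1)] zigzag_in_E[OF ch, of 0] by simp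
  then obtain u where u: "u \<in> L m" "(\<lambda>t. a 0 t - Y t) = row_aug m u"
    using row_exact_0 Y(2) by blast
  have "row_aug (Suc m) (d m u) = row_aug (Suc m) z"
    using ch Y(3) by (simp add: zigzag_def staircase_def dV_diff u(2)[symmetric] flip: dV_row_aug)
  then have "row_aug (Suc m) (\<lambda>t. z t - d m u t) = (\<lambda>_. 0)"
    by (simp add: row_aug_diff)
  then have "(\<lambda>t. z t - d m u t) = (\<lambda>_. 0)"
    by (rule row_aug_inj[OF additive_subgroup_diff[OF L_subgroup z d_L_closed[OF u(1)]]])
  then show ?thesis
    using u(1) by (auto simp: fun_eq_iff)
qed

end

lemma face_face:
  "i \<le> j \<Longrightarrow> face n j (face (Suc n) i x) = face n i (face (Suc n) (Suc j) x)"
  by (auto simp: face_def fun_eq_iff)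

lemma face_in_tuples: "x \<in> tuples G (Suc n) \<Longrightarrow> face n i x \<in> tuples G n"
  by (auto simp: tuples_def face_def PiE_def Pi_def)

lemma tuples_undefined: "x \<in> tuples G n \<Longrightarrow> n < i \<Longrightarrow> x i = undefined"
  by (auto simp: tuples_def PiE_def extensional_def)

lemma tuples_in_carrier: "x \<in> tuples G n \<Longrightarrow> i \<le> n \<Longrightarrow> x i \<in> carrier G"
  by (auto simp: tuples_def PiE_def Pi_def)

lemma Gamma_subset_tuples: "Gamma G U q \<subseteq> tuples G q"
  by (auto simp: Gamma_def)

lemma Gamma_tuplesD: "y \<in> Gamma G U q \<Longrightarrow> y \<in> tuples G q"
  by (simp add: Gamma_def)

lemma Gamma_mono: "U \<subseteq> V \<Longrightarrow> Gamma G U q \<subseteq> Gamma G V q"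
  by (auto simp: Gamma_def)

lemma face_in_Gamma: "y \<in> Gamma G U (Suc q) \<Longrightarrow> face q j y \<in> Gamma G U q"
  by (auto simp: Gamma_def face_in_tuples) (auto simp: face_def)

definition const_tuple :: "nat \<Rightarrow> 'g \<Rightarrow> nat \<Rightarrow> 'g" where
  "const_tuple n g = (\<lambda>i\<in>{..n}. g)"

lemma const_tuple_in_tuples: "g \<in> carrier G \<Longrightarrow> const_tuple n g \<in> tuples G n"
  by (simp add: const_tuple_def tuples_def)

definition translate :: "('g, 'b) monoid_scheme \<Rightarrow> nat \<Rightarrow> 'g \<Rightarrow> (nat \<Rightarrow> 'g) \<Rightarrow> nat \<Rightarrow> 'g" where
  "translate G n g x = (\<lambda>i\<in>{..n}. g \<otimes>\<^bsub>G\<^esub> x i)"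

definition prepend :: "nat \<Rightarrow> 'g \<Rightarrow> (nat \<Rightarrow> 'g) \<Rightarrow> nat \<Rightarrow> 'g" where
  "prepend n c x = (\<lambda>i\<in>{..Suc n}. if i = 0 then c else x (i - 1))"

definition append_tuples :: "nat \<Rightarrow> nat \<Rightarrow> (nat \<Rightarrow> 'g) \<Rightarrow> (nat \<Rightarrow> 'g) \<Rightarrow> nat \<Rightarrow> 'g" where
  "append_tuples n k x y = (\<lambda>i\<in>{..n}. if i \<le> k then x i else y (i - Suc k))"

lemma translate_apply: "i \<le> n \<Longrightarrow> translate G n g x i = g \<otimes>\<^bsub>G\<^esub> x i"
  by (simp add: translate_def)

lemma translate_face: "translate G n g (face n i x) = face n i (translate G (Suc n) g x)"
  by (auto simp: translate_def face_def fun_eq_iff)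

lemma translate_const_tuple:
  "translate G n g (const_tuple n h) = const_tuple n (g \<otimes>\<^bsub>G\<^esub> h)"
  by (simp add: translate_def const_tuple_def fun_eq_iff)

lemma equivariant_iff_translate:
  "equivariant G act n f \<longleftrightarrow> (\<forall>g\<in>carrier G. \<forall>x\<in>tuples G n. f (translate G n g x) = act g (f x))"
  by (simp add: equivariant_def translate_def)

lemma prepend_in_tuples: "c \<in> carrier G \<Longrightarrow> x \<in> tuples G n \<Longrightarrow> prepend n c x \<in> tuples G (Suc n)"
  by (auto simp: prepend_def tuples_def PiE_def Pi_def)

lemma face_0_prepend: "x \<in> tuples G n \<Longrightarrow> face n 0 (prepend n c x) = x"
  by (auto simp: face_def prepend_def fun_eq_iff tuples_undefined)

lemma face_Suc_prepend: "face (Suc n) (Suc i) (prepend (Suc n) c x) = prepend n c (face n i x)"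
  by (auto simp: face_def prepend_def fun_eq_iff)

lemma face_1_prepend_0: "face 0 (Suc 0) (prepend 0 c x) = const_tuple 0 c"
  by (auto simp: face_def prepend_def const_tuple_def fun_eq_iff)

lemma prepend_translate:
  "prepend n (g \<otimes>\<^bsub>G\<^esub> c) (translate G n g x) = translate G (Suc n) g (prepend n c x)"
  by (auto simp: prepend_def translate_def fun_eq_iff)

lemma append_tuples_in_tuples:
  "n = k + Suc l \<Longrightarrow> x \<in> tuples G k \<Longrightarrow> y \<in> tuples G l \<Longrightarrow> append_tuples n k x y \<in> tuples G n"
  by (auto simp: append_tuples_def tuples_def PiE_def Pi_def)

lemma append_tuples_translate:
  "n = k + Suc l \<Longrightarrow> append_tuples n k (translate G k g x) (translate G l g y)
     = translate G n g (append_tuples n k x y)"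
  by (auto simp: append_tuples_def translate_def fun_eq_iff)

lemma face_append_tuples_right:
  "n = k + Suc l \<Longrightarrow> face n (Suc k + j) (append_tuples (Suc n) k x y) = append_tuples n k x (face l j y)"
  by (auto simp: face_def append_tuples_def fun_eq_iff Suc_diff_Suc)

lemma face_append_tuples_left:
  "i \<le> Suc k \<Longrightarrow> face n i (append_tuples (Suc n) (Suc k) x y) = append_tuples n k (face k i x) y"
  by (auto simp: face_def append_tuples_def fun_eq_iff)

lemma face_0_append_tuples: "y \<in> tuples G n \<Longrightarrow> face n 0 (append_tuples (Suc n) 0 x y) = y"
  by (auto simp: face_def append_tuples_def fun_eq_iff tuples_undefined)

lemma face_last_append_tuples: "x \<in> tuples G n \<Longrightarrow> face n (Suc n) (append_tuples (Suc n) n x y) = x"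
  by (auto simp: face_def append_tuples_def fun_eq_iff tuples_undefined)

context group
begin

lemma translate_in_tuples: "g \<in> carrier G \<Longrightarrow> x \<in> tuples G n \<Longrightarrow> translate G n g x \<in> tuples G n"
  by (auto simp: translate_def tuples_def PiE_def Pi_def)

lemma inv_mult_mult_cancel_left:
  "g \<in> carrier G \<Longrightarrow> a \<in> carrier G \<Longrightarrow> b \<in> carrier G \<Longrightarrow> inv (g \<otimes> a) \<otimes> (g \<otimes> b) = inv a \<otimes> b"
  by (simp add: inv_mult_group m_assoc[symmetric]) (simp add: m_assoc)

lemma translate_in_Gamma: "g \<in> carrier G \<Longrightarrow> y \<in> Gamma G U q \<Longrightarrow> translate G q g y \<in> Gamma G U q"
  unfolding Gamma_def using translate_in_tuples
  by (auto simp: translate_def inv_mult_mult_cancel_left tuples_in_carrier)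

lemma translate_translate:
  "g \<in> carrier G \<Longrightarrow> h \<in> carrier G \<Longrightarrow> x \<in> tuples G n
   \<Longrightarrow> translate G n g (translate G n h x) = translate G n (g \<otimes> h) x"
  by (auto simp: translate_def fun_eq_iff m_assoc tuples_in_carrier)

lemma Gamma_0: "\<one> \<in> U \<Longrightarrow> Gamma G U 0 = tuples G 0"
  by (auto simp: Gamma_def tuples_in_carrier)

end

section \<open>The double complex of equivariant cochains\<close>

text \<open>The double complex is carved out of A_lc by equivariance (Alc_eqv). The vertical
  differential dV omits the sign (-1)^p of dv, so that dV and dH commute.\<close>

definition equivariant2 ::
  "('g, 'b) monoid_scheme \<Rightarrow> ('g \<Rightarrow> 'a \<Rightarrow> 'a) \<Rightarrow> nat \<Rightarrow> nat \<Rightarrow> ((nat \<Rightarrow> 'g) \<times> (nat \<Rightarrow> 'g) \<Rightarrow> 'a) \<Rightarrow> bool" where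
  "equivariant2 G act p q F \<longleftrightarrow> (\<forall>g\<in>carrier G. \<forall>x\<in>tuples G p. \<forall>y\<in>tuples G q.
       F (translate G p g x, translate G q g y) = act g (F (x, y)))"

definition Alc_eqv :: "('g, 'b) monoid_scheme \<Rightarrow> 'g topology \<Rightarrow> 'a::ab_group_add topology
     \<Rightarrow> ('g \<Rightarrow> 'a \<Rightarrow> 'a) \<Rightarrow> nat \<Rightarrow> nat \<Rightarrow> ((nat \<Rightarrow> 'g) \<times> (nat \<Rightarrow> 'g) \<Rightarrow> 'a) set" where
  "Alc_eqv G TG TA act p q = {F \<in> Alc G TG TA p q. equivariant2 G act p q F}"

definition dH :: "('g, 'b) monoid_scheme \<Rightarrow> nat \<Rightarrow> nat
     \<Rightarrow> ((nat \<Rightarrow> 'g) \<times> (nat \<Rightarrow> 'g) \<Rightarrow> 'a::ab_group_add) \<Rightarrow> (nat \<Rightarrow> 'g) \<times> (nat \<Rightarrow> 'g) \<Rightarrow> 'a" where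
  "dH G p q F = (\<lambda>(x, y). if (x, y) \<in> tuples G (Suc p) \<times> tuples G q
      then (\<Sum>i\<le>Suc p. alt i (F (face p i x, y))) else 0)"

definition dV :: "('g, 'b) monoid_scheme \<Rightarrow> nat \<Rightarrow> nat
     \<Rightarrow> ((nat \<Rightarrow> 'g) \<times> (nat \<Rightarrow> 'g) \<Rightarrow> 'a::ab_group_add) \<Rightarrow> (nat \<Rightarrow> 'g) \<times> (nat \<Rightarrow> 'g) \<Rightarrow> 'a" where
  "dV G p q F = (\<lambda>(x, y). if (x, y) \<in> tuples G p \<times> tuples G (Suc q)
      then (\<Sum>j\<le>Suc q. alt j (F (x, face q j y))) else 0)"

definition row_aug :: "('g, 'b) monoid_scheme \<Rightarrow> nat
     \<Rightarrow> ((nat \<Rightarrow> 'g) \<Rightarrow> 'a::ab_group_add) \<Rightarrow> (nat \<Rightarrow> 'g) \<times> (nat \<Rightarrow> 'g) \<Rightarrow> 'a" where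
  "row_aug G q u = (\<lambda>(x, y). if (x, y) \<in> tuples G 0 \<times> tuples G q then u y else 0)"

lemma dv_eq_alt_dV: "dv G p q F = (\<lambda>t. alt p (dV G p q F t))"
  by (auto simp: dv_def dV_def fun_eq_iff)

lemma diff_preserving_dH: "diff_preserving (dH G p q)"
  by (auto simp: diff_preserving_def dH_def fun_eq_iff sum_subtractf alt_diff)

lemma diff_preserving_dV: "diff_preserving (dV G p q)"
  by (auto simp: diff_preserving_def dV_def fun_eq_iff sum_subtractf alt_diff)

lemma diff_preserving_row_aug: "diff_preserving (row_aug G q)"
  by (auto simp: diff_preserving_def row_aug_def fun_eq_iff)

lemma diff_preserving_aug: "diff_preserving (aug G p)"
  by (auto simp: diff_preserving_def aug_def fun_eq_iff)

lemma dH_dH: "dH G (Suc p) q (dH G p q F) = (\<lambda>_. 0)"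
proof -
  have "(\<Sum>i\<le>Suc (Suc p). alt i (\<Sum>j\<le>Suc p. alt j (F (face p j (face (Suc p) i x), y)))) = 0" for x y
    by (rule alternating_double_sum_eq_0) (simp add: face_face)
  then show ?thesis
    by (auto simp: dH_def fun_eq_iff face_in_tuples)
qed

lemma dV_dV: "dV G p (Suc q) (dV G p q F) = (\<lambda>_. 0)"
proof -
  have "(\<Sum>i\<le>Suc (Suc q). alt i (\<Sum>j\<le>Suc q. alt j (F (x, face q j (face (Suc q) i y))))) = 0" for x y
    by (rule alternating_double_sum_eq_0) (simp add: face_face)
  then show ?thesis
    by (auto simp: dV_def fun_eq_iff face_in_tuples)
qed

lemma dV_dH: "dV G (Suc p) q (dH G p q F) = dH G p (Suc q) (dV G p q F)"
proof -
  have "(\<Sum>j\<le>Suc q. alt j (\<Sum>i\<le>Suc p. alt i (F (face p i x, face q j y))))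
      = (\<Sum>i\<le>Suc p. alt i (\<Sum>j\<le>Suc q. alt j (F (face p i x, face q j y))))" for x y
    by (simp only: alt_sum alt_alt add.commute sum.swap[of _ "{..Suc q}"])
  then show ?thesis
    by (auto simp: dV_def dH_def fun_eq_iff face_in_tuples)
qed

lemma dV_row_aug: "dV G 0 q (row_aug G q u) = row_aug G (Suc q) (dhom G q u)"
  by (auto simp: fun_eq_iff dV_def row_aug_def dhom_def face_in_tuples)

lemma dH_row_aug: "dH G 0 q (row_aug G q u) = (\<lambda>_. 0)"
  by (auto simp: fun_eq_iff dH_def row_aug_def face_in_tuples alt_Suc)

lemma dH_aug: "dH G p 0 (aug G p f) = aug G (Suc p) (dhom G p f)"
  by (auto simp: fun_eq_iff dH_def aug_def dhom_def face_in_tuples)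

lemma dV_aug: "dV G p 0 (aug G p f) = (\<lambda>_. 0)"
  by (auto simp: fun_eq_iff dV_def aug_def face_in_tuples alt_Suc)

lemma row_aug_inj:
  assumes "monoid G" "supported G q u" "row_aug G q u = (\<lambda>_. 0)"
  shows "u = (\<lambda>_. 0)"
proof
  fix y
  have "row_aug G q u (const_tuple 0 \<one>\<^bsub>G\<^esub>, y) = 0"
    using assms(3) by simp
  then show "u y = 0"
    using assms(1,2) const_tuple_in_tuples[OF monoid.one_closed[OF assms(1)]]
    by (auto simp: row_aug_def supported_def split: if_splits)
qed

lemma aug_inj:
  assumes "monoid G" "supported G p f" "aug G p f = (\<lambda>_. 0)"
  shows "f = (\<lambda>_. 0)"
proof
  fix x
  have "aug G p f (x, const_tuple 0 \<one>\<^bsub>G\<^esub>) = 0"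
    using assms(3) by simp
  then show "f x = 0"
    using assms(1,2) const_tuple_in_tuples[OF monoid.one_closed[OF assms(1)]]
    by (auto simp: aug_def supported_def split: if_splits)
qed

locale top_G_module =
  fixes G :: "('g, 'b) monoid_scheme" (structure)
    and TG :: "'g topology" and TA :: "'a::ab_group_add topology" and act :: "'g \<Rightarrow> 'a \<Rightarrow> 'a"
  assumes top_G_module: "topological_G_module G TG TA act"
begin

sublocale group G
  using top_G_module by (simp add: topological_G_module_def topological_group_def)

lemma topspace_TG: "topspace TG = carrier G"
  using top_G_module by (simp add: topological_G_module_def topological_group_def)

lemma topspace_TA: "topspace TA = UNIV"
  using top_G_module by (simp add: topological_G_module_def topological_ab_group_def)

lemma act_add: "g \<in> carrier G \<Longrightarrow> act g (a + b) = act g a + act g b"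
  using top_G_module by (simp add: topological_G_module_def)

lemma act_one: "act \<one> a = a"
  using top_G_module by (simp add: topological_G_module_def)

lemma act_mult: "g \<in> carrier G \<Longrightarrow> h \<in> carrier G \<Longrightarrow> act (g \<otimes> h) a = act g (act h a)"
  using top_G_module by (simp add: topological_G_module_def)

lemma act_zero: "g \<in> carrier G \<Longrightarrow> act g 0 = 0"
  using act_add[of g 0 0] by simp

lemma act_minus: "g \<in> carrier G \<Longrightarrow> act g (- a) = - act g a"
  using act_add[of g a "- a"] by (simp add: act_zero add_eq_0_iff2)

lemma act_diff: "g \<in> carrier G \<Longrightarrow> act g (a - b) = act g a - act g b"
  using act_add[of g a "- b"] by (simp add: act_minus)

lemma act_alt: "g \<in> carrier G \<Longrightarrow> act g (alt i a) = alt i (act g a)"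
  by (simp add: alt_def act_minus)

lemma act_sum: "g \<in> carrier G \<Longrightarrow> act g (\<Sum>s\<in>S. f s) = (\<Sum>s\<in>S. act g (f s))"
  by (induction S rule: infinite_finite_induct) (simp_all add: act_zero act_add)

lemma continuous_map_A_add:
  assumes "continuous_map X TA f" "continuous_map X TA g"
  shows "continuous_map X TA (\<lambda>t. f t + g t)"
proof -
  have "continuous_map (prod_topology TA TA) TA (\<lambda>(x, y). x + y)"
    using top_G_module by (simp add: topological_G_module_def topological_ab_group_def)
  from continuous_map_compose[OF continuous_map_pairedI[OF assms] this] show ?thesis
    by (simp add: o_def)
qed

lemma continuous_map_A_minus: "continuous_map X TA f \<Longrightarrow> continuous_map X TA (\<lambda>t. - f t)"
  using top_G_module continuous_map_compose[of X TA f TA uminus]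
  by (simp add: topological_G_module_def topological_ab_group_def o_def)

lemma continuous_map_A_diff:
  "continuous_map X TA f \<Longrightarrow> continuous_map X TA g \<Longrightarrow> continuous_map X TA (\<lambda>t. f t - g t)"
  using continuous_map_A_add[OF _ continuous_map_A_minus, of X f g] by simp

lemma continuous_map_A_alt: "continuous_map X TA f \<Longrightarrow> continuous_map X TA (\<lambda>t. alt i (f t))"
  by (simp add: alt_def continuous_map_A_minus)

lemma continuous_map_A_sum:
  "(\<And>s. s \<in> S \<Longrightarrow> continuous_map X TA (f s)) \<Longrightarrow> continuous_map X TA (\<lambda>t. \<Sum>s\<in>S. f s t)"
  by (induction S rule: infinite_finite_induct) (simp_all add: continuous_map_A_add topspace_TA)

lemma continuous_map_G_mult:
  assumes "continuous_map X TG f" "continuous_map X TG g"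
  shows "continuous_map X TG (\<lambda>t. f t \<otimes> g t)"
proof -
  have "continuous_map (prod_topology TG TG) TG (\<lambda>(x, y). x \<otimes> y)"
    using top_G_module by (simp add: topological_G_module_def topological_group_def)
  from continuous_map_compose[OF continuous_map_pairedI[OF assms] this] show ?thesis
    by (simp add: o_def)
qed

lemma continuous_map_G_inv: "continuous_map X TG f \<Longrightarrow> continuous_map X TG (\<lambda>t. inv (f t))"
  using top_G_module continuous_map_compose[of X TG f TG "\<lambda>x. inv x"]
  by (simp add: topological_G_module_def topological_group_def o_def)

lemma continuous_map_act:
  assumes "continuous_map X TG f" "continuous_map X TA g"
  shows "continuous_map X TA (\<lambda>t. act (f t) (g t))"
proof -
  have "continuous_map (prod_topology TG TA) TA (\<lambda>(g, a). act g a)"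
    using top_G_module by (simp add: topological_G_module_def)
  from continuous_map_compose[OF continuous_map_pairedI[OF assms] this] show ?thesis
    by (simp add: o_def)
qed

lemma topspace_tuple_top: "topspace (tuple_top TG n) = tuples G n"
  by (simp add: tuple_top_def tuples_def topspace_TG)

lemma continuous_map_tuple_top_iff:
  "continuous_map X (tuple_top TG n) h \<longleftrightarrow>
     (\<forall>t\<in>topspace X. h t \<in> extensional {..n}) \<and> (\<forall>k\<le>n. continuous_map X TG (\<lambda>t. h t k))"
  by (auto simp: tuple_top_def continuous_map_componentwise)

lemma continuous_map_face:
  assumes "continuous_map X (tuple_top TG (Suc n)) h"
  shows "continuous_map X (tuple_top TG n) (\<lambda>t. face n i (h t))"
  using assms unfolding continuous_map_tuple_top_iff
  by (auto simp: face_def)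

lemma continuous_map_translate:
  assumes "continuous_map X TG g" "continuous_map X (tuple_top TG n) h"
  shows "continuous_map X (tuple_top TG n) (\<lambda>t. translate G n (g t) (h t))"
  using assms unfolding continuous_map_tuple_top_iff
  by (auto simp: translate_def intro: continuous_map_G_mult)

lemma continuous_map_prepend:
  assumes "continuous_map X TG c" "continuous_map X (tuple_top TG n) h"
  shows "continuous_map X (tuple_top TG (Suc n)) (\<lambda>t. prepend n (c t) (h t))"
  unfolding continuous_map_tuple_top_iff
proof (intro conjI ballI allI impI)
  show "continuous_map X TG (\<lambda>t. prepend n (c t) (h t) k)" if "k \<le> Suc n" for k
    using that assms by (cases k) (auto simp: prepend_def continuous_map_tuple_top_iff)
qed (simp add: prepend_def)

lemma continuous_map_const_tuple:
  "continuous_map X TG c \<Longrightarrow> continuous_map X (tuple_top TG n) (\<lambda>t. const_tuple n (c t))"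
  unfolding continuous_map_tuple_top_iff by (simp add: const_tuple_def)

lemma continuous_map_append_tuples:
  assumes n: "n = k + Suc l"
    and "continuous_map X (tuple_top TG k) f" "continuous_map X (tuple_top TG l) g"
  shows "continuous_map X (tuple_top TG n) (\<lambda>t. append_tuples n k (f t) (g t))"
  unfolding continuous_map_tuple_top_iff
proof (intro conjI ballI allI impI)
  fix i assume i: "i \<le> n"
  show "continuous_map X TG (\<lambda>t. append_tuples n k (f t) (g t) i)"
  proof (cases "i \<le> k")
    case True
    then show ?thesis
      using i assms(2) by (simp add: append_tuples_def continuous_map_tuple_top_iff)
  next
    case False
    then have "i - Suc k \<le> l"
      using i n by arith
    then show ?thesis
      using i False assms(3) by (simp add: append_tuples_def continuous_map_tuple_top_iff)
  qed
qed (simp add: append_tuples_def)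

lemma identity_nbhd_carrier: "identity_nbhd G TG (carrier G)"
  unfolding identity_nbhd_def using topspace_TG by (metis openin_topspace one_closed subset_refl)

lemma identity_nbhd_Int:
  "identity_nbhd G TG U \<Longrightarrow> identity_nbhd G TG V \<Longrightarrow> identity_nbhd G TG (U \<inter> V)"
  unfolding identity_nbhd_def by (metis Int_mono Int_iff le_infI1 openin_Int)

lemma identity_nbhd_one: "identity_nbhd G TG U \<Longrightarrow> \<one> \<in> U"
  unfolding identity_nbhd_def by blast

definition Alc_top :: "nat \<Rightarrow> nat \<Rightarrow> 'g set \<Rightarrow> ((nat \<Rightarrow> 'g) \<times> (nat \<Rightarrow> 'g)) topology" where
  "Alc_top p q U = subtopology (prod_topology (tuple_top TG p) (tuple_top TG q)) (tuples G p \<times> Gamma G U q)"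

lemma topspace_Alc_top: "topspace (Alc_top p q U) = tuples G p \<times> Gamma G U q"
  using Gamma_subset_tuples by (auto simp: Alc_top_def topspace_tuple_top)

lemma continuous_map_Alc_top_fst: "continuous_map (Alc_top p q U) (tuple_top TG p) fst"
  by (simp add: Alc_top_def continuous_map_subtopology_fst)

lemma continuous_map_Alc_top_snd: "continuous_map (Alc_top p q U) (tuple_top TG q) snd"
  by (simp add: Alc_top_def continuous_map_subtopology_snd)

lemma continuous_map_into_Alc_top:
  assumes "continuous_map X (tuple_top TG p) f" "continuous_map X (tuple_top TG q) g"
    and "\<And>t. t \<in> topspace X \<Longrightarrow> f t \<in> tuples G p \<and> g t \<in> Gamma G U q"
  shows "continuous_map X (Alc_top p q U) (\<lambda>t. (f t, g t))"
  unfolding Alc_top_def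
  by (rule continuous_map_into_subtopology) (use assms in \<open>auto intro!: continuous_map_pairedI\<close>)

lemma continuous_map_compose_Alc_top:
  "continuous_map (Alc_top p q U) TA F \<Longrightarrow> continuous_map X (Alc_top p q U) h
   \<Longrightarrow> continuous_map X TA (\<lambda>t. F (h t))"
  using continuous_map_compose[of X "Alc_top p q U" h TA F] by (simp add: o_def)

lemma continuous_map_Alc_top_mono:
  "U' \<subseteq> U \<Longrightarrow> continuous_map (Alc_top p q U) TA F \<Longrightarrow> continuous_map (Alc_top p q U') TA F"
  unfolding Alc_top_def
  by (erule continuous_map_from_subtopology_mono) (use Gamma_mono in blast)

abbreviation "E \<equiv> Alc_eqv G TG TA act"
abbreviation "C_c \<equiv> Cc G TG TA act"
abbreviation "C_lc \<equiv> Clc G TG TA act"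

lemma Alc_eqv_iff: "F \<in> E p q \<longleftrightarrow> (\<forall>t. t \<notin> tuples G p \<times> tuples G q \<longrightarrow> F t = 0)
   \<and> equivariant2 G act p q F \<and> (\<exists>U. identity_nbhd G TG U \<and> continuous_map (Alc_top p q U) TA F)"
  by (auto simp: Alc_eqv_def Alc_def Alc_top_def)

lemma additive_subgroup_Alc_eqv: "additive_subgroup (E p q)"
  unfolding additive_subgroup_def
proof (intro conjI ballI)
  show "(\<lambda>_. 0) \<in> E p q"
    unfolding Alc_eqv_iff equivariant2_def
    using identity_nbhd_carrier by (auto simp: act_zero topspace_TA)
next
  fix F F' assume F: "F \<in> E p q" and F': "F' \<in> E p q"
  obtain U where U: "identity_nbhd G TG U" "continuous_map (Alc_top p q U) TA F"
    using F Alc_eqv_iff by blast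
  obtain U' where U': "identity_nbhd G TG U'" "continuous_map (Alc_top p q U') TA F'"
    using F' Alc_eqv_iff by blast
  have "continuous_map (Alc_top p q (U \<inter> U')) TA (\<lambda>t. F t - F' t)"
    by (rule continuous_map_A_diff; rule continuous_map_Alc_top_mono[of "U \<inter> U'"]) (use U U' in auto)
  then show "(\<lambda>t. F t - F' t) \<in> E p q"
    using F F' identity_nbhd_Int[OF U(1) U'(1)]
    unfolding Alc_eqv_iff equivariant2_def by (auto simp: act_diff)
qed

lemma dH_in_Alc_eqv:
  assumes F: "F \<in> E p q"
  shows "dH G p q F \<in> E (Suc p) q"
proof -
  obtain U where U: "identity_nbhd G TG U" "continuous_map (Alc_top p q U) TA F"
    using F Alc_eqv_iff by blast
  have eqv: "equivariant2 G act p q F"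
    using F Alc_eqv_iff by blast
  have "continuous_map (Alc_top (Suc p) q U) TA (\<lambda>(x, y). \<Sum>i\<le>Suc p. alt i (F (face p i x, y)))"
    unfolding case_prod_beta
  proof (intro continuous_map_A_sum continuous_map_A_alt continuous_map_compose_Alc_top[OF U(2)]
      continuous_map_into_Alc_top continuous_map_face continuous_map_Alc_top_fst continuous_map_Alc_top_snd)
    show "t \<in> topspace (Alc_top (Suc p) q U) \<Longrightarrow> face p i (fst t) \<in> tuples G p \<and> snd t \<in> Gamma G U q" for t i
      by (auto simp: topspace_Alc_top face_in_tuples)
  qed
  then have "continuous_map (Alc_top (Suc p) q U) TA (dH G p q F)"
    by (rule continuous_map_eq) (auto dest: Gamma_tuplesD simp: topspace_Alc_top dH_def)
  moreover have "equivariant2 G act (Suc p) q (dH G p q F)"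
    using eqv by (auto simp: equivariant2_def dH_def translate_in_tuples face_in_tuples
        act_sum act_alt simp del: sum.atMost_Suc simp flip: translate_face)
  ultimately show ?thesis
    using U(1) by (auto simp: Alc_eqv_iff dH_def)
qed

lemma dV_in_Alc_eqv:
  assumes F: "F \<in> E p q"
  shows "dV G p q F \<in> E p (Suc q)"
proof -
  obtain U where U: "identity_nbhd G TG U" "continuous_map (Alc_top p q U) TA F"
    using F Alc_eqv_iff by blast
  have eqv: "equivariant2 G act p q F"
    using F Alc_eqv_iff by blast
  have "continuous_map (Alc_top p (Suc q) U) TA (\<lambda>(x, y). \<Sum>j\<le>Suc q. alt j (F (x, face q j y)))"
    unfolding case_prod_beta
  proof (intro continuous_map_A_sum continuous_map_A_alt continuous_map_compose_Alc_top[OF U(2)]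
      continuous_map_into_Alc_top continuous_map_face continuous_map_Alc_top_fst continuous_map_Alc_top_snd)
    show "t \<in> topspace (Alc_top p (Suc q) U) \<Longrightarrow> fst t \<in> tuples G p \<and> face q j (snd t) \<in> Gamma G U q" for t j
      by (auto simp: topspace_Alc_top face_in_Gamma)
  qed
  then have "continuous_map (Alc_top p (Suc q) U) TA (dV G p q F)"
    by (rule continuous_map_eq) (auto dest: Gamma_tuplesD simp: topspace_Alc_top dV_def)
  moreover have "equivariant2 G act p (Suc q) (dV G p q F)"
    using eqv by (auto simp: equivariant2_def dV_def translate_in_tuples face_in_tuples
        act_sum act_alt simp del: sum.atMost_Suc simp flip: translate_face)
  ultimately show ?thesis
    using U(1) by (auto simp: Alc_eqv_iff dV_def)
qed

lemma row_aug_in_Alc_eqv: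
  assumes u: "u \<in> C_lc q"
  shows "row_aug G q u \<in> E 0 q"
proof -
  obtain U where U: "identity_nbhd G TG U"
    "continuous_map (subtopology (tuple_top TG q) (Gamma G U q)) TA u"
    using u by (auto simp: Clc_def)
  have "continuous_map (Alc_top 0 q U) (subtopology (tuple_top TG q) (Gamma G U q)) snd"
    by (rule continuous_map_into_subtopology[OF continuous_map_Alc_top_snd]) (auto simp: topspace_Alc_top)
  then have "continuous_map (Alc_top 0 q U) TA (row_aug G q u)"
    by (rule continuous_map_eq[OF continuous_map_compose[OF _ U(2)]])
      (auto dest: Gamma_tuplesD simp: topspace_Alc_top row_aug_def)
  moreover have "equivariant2 G act 0 q (row_aug G q u)"
    using u by (auto simp: equivariant2_def row_aug_def translate_in_tuples Clc_def equivariant_iff_translate)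
  ultimately show ?thesis
    using U(1) by (auto simp: Alc_eqv_iff row_aug_def)
qed

lemma aug_in_Alc_eqv:
  assumes f: "f \<in> C_c p"
  shows "aug G p f \<in> E p 0"
proof -
  have "continuous_map (Alc_top p 0 (carrier G)) TA (aug G p f)"
    using f by (intro continuous_map_eq[OF continuous_map_compose[OF continuous_map_Alc_top_fst]])
      (auto dest: Gamma_tuplesD simp: Cc_def topspace_Alc_top aug_def)
  moreover have "equivariant2 G act p 0 (aug G p f)"
    using f by (auto simp: equivariant2_def aug_def translate_in_tuples Cc_def equivariant_iff_translate)
  ultimately show ?thesis
    using identity_nbhd_carrier by (auto simp: Alc_eqv_iff aug_def)
qed

lemma equivariant_dhom: "equivariant G act n f \<Longrightarrow> equivariant G act (Suc n) (dhom G n f)"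
  by (auto simp: equivariant_iff_translate dhom_def translate_in_tuples face_in_tuples
      act_sum act_alt simp del: sum.atMost_Suc simp flip: translate_face)

lemma continuous_map_dhom:
  assumes f: "continuous_map (subtopology (tuple_top TG n) T) TA f"
    and S: "S \<subseteq> tuples G (Suc n)" "\<And>x i. x \<in> S \<Longrightarrow> face n i x \<in> T"
  shows "continuous_map (subtopology (tuple_top TG (Suc n)) S) TA (dhom G n f)"
proof -
  have face: "continuous_map (subtopology (tuple_top TG (Suc n)) S) (subtopology (tuple_top TG n) T) (face n i)" for i
    using S(2) by (intro continuous_map_into_subtopology continuous_map_face[where h = id, simplified]
        continuous_map_from_subtopology continuous_map_id) auto
  have "continuous_map (subtopology (tuple_top TG (Suc n)) S) TA (\<lambda>x. f (face n i x))" for i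
    using continuous_map_compose[OF face f] by (simp add: o_def)
  then have "continuous_map (subtopology (tuple_top TG (Suc n)) S) TA (\<lambda>x. \<Sum>i\<le>Suc n. alt i (f (face n i x)))"
    by (intro continuous_map_A_sum continuous_map_A_alt)
  then show ?thesis
    by (rule continuous_map_eq) (use S(1) in \<open>auto simp: dhom_def\<close>)
qed

lemma supported_dhom: "supported G (Suc n) (dhom G n f)"
  by (simp add: supported_def dhom_def)

lemma dhom_in_Cc:
  assumes f: "f \<in> C_c n"
  shows "dhom G n f \<in> C_c (Suc n)"
proof -
  have "continuous_map (subtopology (tuple_top TG n) (tuples G n)) TA f"
    using f by (simp add: Cc_def flip: topspace_tuple_top)
  then have "continuous_map (subtopology (tuple_top TG (Suc n)) (tuples G (Suc n))) TA (dhom G n f)"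
    by (rule continuous_map_dhom) (simp_all add: face_in_tuples)
  then show ?thesis
    using f by (simp add: Cc_def equivariant_dhom supported_dhom flip: topspace_tuple_top)
qed

lemma dhom_in_Clc:
  assumes f: "f \<in> C_lc n"
  shows "dhom G n f \<in> C_lc (Suc n)"
proof -
  obtain U where U: "identity_nbhd G TG U"
    "continuous_map (subtopology (tuple_top TG n) (Gamma G U n)) TA f"
    using f by (auto simp: Clc_def)
  have "continuous_map (subtopology (tuple_top TG (Suc n)) (Gamma G U (Suc n))) TA (dhom G n f)"
    by (rule continuous_map_dhom[OF U(2)]) (simp_all add: Gamma_subset_tuples face_in_Gamma)
  then show ?thesis
    using f U(1) by (auto simp: Clc_def equivariant_dhom supported_dhom)
qed

lemma additive_subgroup_Cc: "additive_subgroup (C_c n)"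
  by (auto simp: additive_subgroup_def Cc_def supported_def equivariant_def act_zero act_diff
      topspace_TA continuous_map_A_diff)

lemma additive_subgroup_Clc: "additive_subgroup (C_lc n)"
  unfolding additive_subgroup_def
proof (intro conjI ballI)
  show "(\<lambda>_. 0) \<in> C_lc n"
    using identity_nbhd_carrier by (auto simp: Clc_def supported_def equivariant_def act_zero topspace_TA)
next
  fix f f' assume f: "f \<in> C_lc n" and f': "f' \<in> C_lc n"
  obtain U where U: "identity_nbhd G TG U" "continuous_map (subtopology (tuple_top TG n) (Gamma G U n)) TA f"
    using f by (auto simp: Clc_def)
  obtain U' where U': "identity_nbhd G TG U'" "continuous_map (subtopology (tuple_top TG n) (Gamma G U' n)) TA f'"
    using f' by (auto simp: Clc_def)
  have "continuous_map (subtopology (tuple_top TG n) (Gamma G (U \<inter> U') n)) TA (\<lambda>t. f t - f' t)"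
    by (rule continuous_map_A_diff[OF continuous_map_from_subtopology_mono[OF U(2) Gamma_mono]
          continuous_map_from_subtopology_mono[OF U'(2) Gamma_mono]]) auto
  then show "(\<lambda>t. f t - f' t) \<in> C_lc n"
    using f f' identity_nbhd_Int[OF U(1) U'(1)]
    by (auto simp: Clc_def supported_def equivariant_def act_diff)
qed

lemma Cc_subset_Clc: "C_c n \<subseteq> C_lc n"
  using identity_nbhd_carrier by (auto simp: Cc_def Clc_def intro: continuous_map_from_subtopology)

lemma Clc_0_subset_Cc_0: "C_lc 0 \<subseteq> C_c 0"
proof
  fix f assume f: "f \<in> C_lc 0"
  then obtain U where "identity_nbhd G TG U"
    "continuous_map (subtopology (tuple_top TG 0) (Gamma G U 0)) TA f"
    by (auto simp: Clc_def)
  then show "f \<in> C_c 0"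
    using f by (auto simp: Cc_def Clc_def Gamma_0 identity_nbhd_one topspace_tuple_top[symmetric])
qed

end

section \<open>Exactness of the augmented rows and columns\<close>

context top_G_module
begin

text \<open>Prepending the first entry of the second argument is a contracting homotopy of the rows;
  it preserves equivariance because that entry is translated along with the rest.\<close>

definition row_contraction :: "nat \<Rightarrow> nat \<Rightarrow> ((nat \<Rightarrow> 'g) \<times> (nat \<Rightarrow> 'g) \<Rightarrow> 'a)
     \<Rightarrow> (nat \<Rightarrow> 'g) \<times> (nat \<Rightarrow> 'g) \<Rightarrow> 'a" where
  "row_contraction p q F = (\<lambda>(x, y). if (x, y) \<in> tuples G p \<times> tuples G q
      then F (prepend p (y 0) x, y) else 0)"

lemma row_contraction_in_Alc_eqv:
  assumes F: "F \<in> E (Suc p) q"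
  shows "row_contraction p q F \<in> E p q"
proof -
  obtain U where U: "identity_nbhd G TG U" "continuous_map (Alc_top (Suc p) q U) TA F"
    using F Alc_eqv_iff by blast
  have "continuous_map (Alc_top p q U) TA (\<lambda>t. F (prepend p (snd t 0) (fst t), snd t))"
  proof (intro continuous_map_compose_Alc_top[OF U(2)] continuous_map_into_Alc_top continuous_map_prepend
      continuous_map_Alc_top_fst continuous_map_Alc_top_snd)
    show "continuous_map (Alc_top p q U) TG (\<lambda>t. snd t 0)"
      using continuous_map_Alc_top_snd by (simp add: continuous_map_tuple_top_iff)
    show "prepend p (snd t 0) (fst t) \<in> tuples G (Suc p) \<and> snd t \<in> Gamma G U q"
      if "t \<in> topspace (Alc_top p q U)" for t
      using that by (auto simp: topspace_Alc_top prepend_in_tuples tuples_in_carrier dest: Gamma_tuplesD)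
  qed
  then have "continuous_map (Alc_top p q U) TA (row_contraction p q F)"
    by (rule continuous_map_eq) (auto dest: Gamma_tuplesD simp: topspace_Alc_top row_contraction_def)
  moreover have "equivariant2 G act p q (row_contraction p q F)"
  proof (clarsimp simp: equivariant2_def)
    fix g x y assume g: "g \<in> carrier G" and x: "x \<in> tuples G p" and y: "y \<in> tuples G q"
    have "F (translate G (Suc p) g (prepend p (y 0) x), translate G q g y) = act g (F (prepend p (y 0) x, y))"
      using F g x y by (simp add: Alc_eqv_iff equivariant2_def prepend_in_tuples tuples_in_carrier)
    then show "row_contraction p q F (translate G p g x, translate G q g y)
        = act g (row_contraction p q F (x, y))"
      using g x y by (simp add: row_contraction_def translate_in_tuples translate_apply flip: prepend_translate)
  qed
  ultimately show ?thesis
    using U(1) by (auto simp: Alc_eqv_iff row_contraction_def)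
qed

lemma dH_row_contraction:
  assumes F: "F \<in> E (Suc p) q" and dF: "dH G (Suc p) q F = (\<lambda>_. 0)"
  shows "dH G p q (row_contraction p q F) = F"
proof
  fix t :: "(nat \<Rightarrow> 'g) \<times> (nat \<Rightarrow> 'g)"
  obtain x y where t: "t = (x, y)"
    by fastforce
  show "dH G p q (row_contraction p q F) t = F t"
  proof (cases "x \<in> tuples G (Suc p) \<and> y \<in> tuples G q")
    case True
    then have c: "prepend (Suc p) (y 0) x \<in> tuples G (Suc (Suc p))"
      by (auto intro: prepend_in_tuples tuples_in_carrier)
    have f0: "face (Suc p) 0 (prepend (Suc p) (y 0) x) = x"
      using True by (auto intro: face_0_prepend)
    have "dH G (Suc p) q F (prepend (Suc p) (y 0) x, y) = 0"
      using dF by simp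
    then have "F (x, y) + (\<Sum>i\<le>Suc p. alt (Suc i) (F (prepend p (y 0) (face p i x), y))) = 0"
      using c True by (simp add: dH_def sum.atMost_Suc_shift f0 face_Suc_prepend del: sum.atMost_Suc)
    then show ?thesis
      using True by (simp add: t dH_def row_contraction_def face_in_tuples alt_Suc sum_negf add_eq_0_iff2
          del: sum.atMost_Suc)
  next
    case False
    then show ?thesis
      using F by (auto simp: t dH_def Alc_eqv_iff)
  qed
qed

lemma row_exact:
  assumes "F \<in> E (Suc p) q" "dH G (Suc p) q F = (\<lambda>_. 0)"
  shows "\<exists>H\<in>E p q. F = dH G p q H"
  using assms row_contraction_in_Alc_eqv dH_row_contraction by metis

definition row_restriction :: "nat \<Rightarrow> ((nat \<Rightarrow> 'g) \<times> (nat \<Rightarrow> 'g) \<Rightarrow> 'a) \<Rightarrow> (nat \<Rightarrow> 'g) \<Rightarrow> 'a" where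
  "row_restriction q F = (\<lambda>y. if y \<in> tuples G q then F (const_tuple 0 (y 0), y) else 0)"

lemma row_restriction_in_Clc:
  assumes F: "F \<in> E 0 q"
  shows "row_restriction q F \<in> C_lc q"
proof -
  obtain U where U: "identity_nbhd G TG U" "continuous_map (Alc_top 0 q U) TA F"
    using F Alc_eqv_iff by blast
  have sub: "continuous_map (subtopology (tuple_top TG q) (Gamma G U q)) (tuple_top TG q) (\<lambda>y. y)"
    by (simp add: continuous_map_from_subtopology continuous_map_id[unfolded id_def])
  have "continuous_map (subtopology (tuple_top TG q) (Gamma G U q)) TA (\<lambda>y. F (const_tuple 0 (y 0), y))"
  proof (intro continuous_map_compose_Alc_top[OF U(2)] continuous_map_into_Alc_top continuous_map_const_tuple
      sub)
    show "continuous_map (subtopology (tuple_top TG q) (Gamma G U q)) TG (\<lambda>y. y 0)"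
      using sub by (simp add: continuous_map_tuple_top_iff)
    show "const_tuple 0 (y 0) \<in> tuples G 0 \<and> y \<in> Gamma G U q"
      if "y \<in> topspace (subtopology (tuple_top TG q) (Gamma G U q))" for y
      using that by (auto simp: const_tuple_in_tuples tuples_in_carrier dest: Gamma_tuplesD)
  qed
  then have "continuous_map (subtopology (tuple_top TG q) (Gamma G U q)) TA (row_restriction q F)"
    by (rule continuous_map_eq) (auto dest: Gamma_tuplesD simp: row_restriction_def)
  moreover have "equivariant G act q (row_restriction q F)"
  proof (clarsimp simp: equivariant_iff_translate)
    fix g y assume g: "g \<in> carrier G" and y: "y \<in> tuples G q"
    have "F (translate G 0 g (const_tuple 0 (y 0)), translate G q g y) = act g (F (const_tuple 0 (y 0), y))"
      using F g y by (simp add: Alc_eqv_iff equivariant2_def const_tuple_in_tuples tuples_in_carrier)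
    then show "row_restriction q F (translate G q g y) = act g (row_restriction q F y)"
      using g y by (simp add: row_restriction_def translate_in_tuples translate_const_tuple translate_apply)
  qed
  ultimately show ?thesis
    using U(1) by (auto simp: Clc_def supported_def row_restriction_def)
qed

lemma row_aug_row_restriction:
  assumes F: "F \<in> E 0 q" and dF: "dH G 0 q F = (\<lambda>_. 0)"
  shows "row_aug G q (row_restriction q F) = F"
proof
  fix t :: "(nat \<Rightarrow> 'g) \<times> (nat \<Rightarrow> 'g)"
  obtain x y where t: "t = (x, y)"
    by fastforce
  show "row_aug G q (row_restriction q F) t = F t"
  proof (cases "x \<in> tuples G 0 \<and> y \<in> tuples G q")
    case True
    then have "prepend 0 (y 0) x \<in> tuples G (Suc 0)"
      by (auto intro: prepend_in_tuples tuples_in_carrier)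
    moreover have "dH G 0 q F (prepend 0 (y 0) x, y) = 0"
      using dF by simp
    moreover have "face 0 0 (prepend 0 (y 0) x) = x"
      using True by (auto intro: face_0_prepend)
    ultimately have "F (x, y) - F (const_tuple 0 (y 0), y) = 0"
      using True by (simp add: dH_def face_1_prepend_0 alt_Suc)
    then show ?thesis
      using True by (simp add: t row_aug_def row_restriction_def)
  next
    case False
    then show ?thesis
      using F by (auto simp: t row_aug_def Alc_eqv_iff)
  qed
qed

lemma row_exact_0:
  assumes "F \<in> E 0 q" "dH G 0 q F = (\<lambda>_. 0)"
  shows "\<exists>u\<in>C_lc q. F = row_aug G q u"
  using assms row_restriction_in_Clc row_aug_row_restriction by metis

text \<open>Equivariant extension of the values of F on tuples whose first entry is the identity.\<close>

definition equivariantize :: "nat \<Rightarrow> nat \<Rightarrow> ((nat \<Rightarrow> 'g) \<times> (nat \<Rightarrow> 'g) \<Rightarrow> 'a)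
     \<Rightarrow> (nat \<Rightarrow> 'g) \<times> (nat \<Rightarrow> 'g) \<Rightarrow> 'a" where
  "equivariantize p q F = (\<lambda>(x, y). if (x, y) \<in> tuples G p \<times> tuples G q
      then act (x 0) (F (translate G p (inv (x 0)) x, translate G q (inv (x 0)) y)) else 0)"

lemma equivariantize_in_Alc_eqv:
  assumes U: "identity_nbhd G TG U" "continuous_map (Alc_top p q U) TA F"
  shows "equivariantize p q F \<in> E p q"
proof -
  have x0: "continuous_map (Alc_top p q U) TG (\<lambda>t. fst t 0)"
    using continuous_map_Alc_top_fst by (simp add: continuous_map_tuple_top_iff)
  have "continuous_map (Alc_top p q U) TA
      (\<lambda>t. act (fst t 0) (F (translate G p (inv (fst t 0)) (fst t), translate G q (inv (fst t 0)) (snd t))))"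
  proof (intro continuous_map_act continuous_map_compose_Alc_top[OF U(2)] continuous_map_into_Alc_top
      continuous_map_translate continuous_map_G_inv x0 continuous_map_Alc_top_fst continuous_map_Alc_top_snd)
    show "translate G p (inv (fst t 0)) (fst t) \<in> tuples G p \<and> translate G q (inv (fst t 0)) (snd t) \<in> Gamma G U q"
      if "t \<in> topspace (Alc_top p q U)" for t
      using that by (auto simp: topspace_Alc_top translate_in_tuples translate_in_Gamma tuples_in_carrier)
  qed
  then have "continuous_map (Alc_top p q U) TA (equivariantize p q F)"
    by (rule continuous_map_eq) (auto dest: Gamma_tuplesD simp: topspace_Alc_top equivariantize_def)
  moreover have "equivariant2 G act p q (equivariantize p q F)"
  proof (clarsimp simp: equivariant2_def)
    fix g x y assume g: "g \<in> carrier G" and x: "x \<in> tuples G p" and y: "y \<in> tuples G q"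
    have x0: "x 0 \<in> carrier G"
      using tuples_in_carrier[OF x] by simp
    have "translate G p g x 0 = g \<otimes> x 0"
      by (simp add: translate_def)
    then show "equivariantize p q F (translate G p g x, translate G q g y) = act g (equivariantize p q F (x, y))"
      using g x y x0
      by (simp add: equivariantize_def translate_in_tuples translate_translate inv_mult_group m_assoc act_mult)
  qed
  ultimately show ?thesis
    using U(1) by (auto simp: Alc_eqv_iff equivariantize_def)
qed

lemma dV_equivariantize: "dV G p q (equivariantize p q F) = equivariantize p (Suc q) (dV G p q F)"
  by (auto simp: fun_eq_iff dV_def equivariantize_def face_in_tuples translate_in_tuples tuples_in_carrier
      act_sum act_alt translate_face simp del: sum.atMost_Suc)

lemma equivariantize_eq:
  assumes "F \<in> E p q"
  shows "equivariantize p q F = F"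
proof -
  have "F (translate G p (inv (x 0)) x, translate G q (inv (x 0)) y) = act (inv (x 0)) (F (x, y))"
    if "x \<in> tuples G p" "y \<in> tuples G q" for x y
    using assms that by (simp add: Alc_eqv_iff equivariant2_def tuples_in_carrier)
  then show ?thesis
    using assms by (auto simp: fun_eq_iff equivariantize_def Alc_eqv_iff tuples_in_carrier act_one
        simp flip: act_mult)
qed

end

locale top_G_module_exact_columns = top_G_module +
  assumes column_exact: "\<And>p. column_exact G TG TA p"
begin

lemma col_exact_0:
  assumes F: "F \<in> E p 0" and dF: "dV G p 0 F = (\<lambda>_. 0)"
  shows "\<exists>f\<in>C_c p. F = aug G p f"
proof -
  have "F \<in> {F \<in> Alc G TG TA p 0. dv G p 0 F = (\<lambda>_. 0)}"
    using F dF by (simp add: Alc_eqv_def dv_eq_alt_dV)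
  moreover have "{F \<in> Alc G TG TA p 0. dv G p 0 F = (\<lambda>_. 0)} = aug G p ` Ac G TG TA p"
    using column_exact by (simp add: column_exact_def)
  ultimately obtain f where f: "f \<in> Ac G TG TA p" "F = aug G p f"
    by blast
  have "equivariant G act p f"
  proof (clarsimp simp: equivariant_iff_translate)
    fix g x assume g: "g \<in> carrier G" and x: "x \<in> tuples G p"
    have "F (translate G p g x, translate G 0 g (const_tuple 0 \<one>)) = act g (F (x, const_tuple 0 \<one>))"
      using F g x by (simp add: Alc_eqv_iff equivariant2_def const_tuple_in_tuples)
    then show "f (translate G p g x) = act g (f x)"
      using f(2) g x by (simp add: aug_def translate_in_tuples const_tuple_in_tuples)
  qed
  then show ?thesis
    using f by (auto simp: Ac_def Cc_def)
qed

lemma col_exact: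
  assumes F: "F \<in> E p (Suc q)" and dF: "dV G p (Suc q) F = (\<lambda>_. 0)"
  shows "\<exists>H\<in>E p q. F = dV G p q H"
proof -
  have "F \<in> {F \<in> Alc G TG TA p (Suc q). dv G p (Suc q) F = (\<lambda>_. 0)}"
    using F dF by (simp add: Alc_eqv_def dv_eq_alt_dV)
  moreover have "{F \<in> Alc G TG TA p (Suc q). dv G p (Suc q) F = (\<lambda>_. 0)} = dv G p q ` Alc G TG TA p q"
    using column_exact by (simp add: column_exact_def)
  ultimately obtain H where H: "H \<in> Alc G TG TA p q" "F = dv G p q H"
    by blast
  obtain U where U: "identity_nbhd G TG U" "continuous_map (Alc_top p q U) TA H"
    using H(1) by (auto simp: Alc_def Alc_top_def)
  define H' where "H' = equivariantize p q (\<lambda>t. alt p (H t))"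
  have "H' \<in> E p q"
    unfolding H'_def by (rule equivariantize_in_Alc_eqv[OF U(1) continuous_map_A_alt[OF U(2)]])
  moreover have "dV G p q (\<lambda>t. alt p (H t)) = F"
    using H(2) by (simp add: dv_eq_alt_dV diff_preserving_alt[OF diff_preserving_dV])
  then have "dV G p q H' = F"
    using F by (simp add: H'_def dV_equivariantize equivariantize_eq)
  ultimately show ?thesis
    by blast
qed

end

section \<open>Comparison of the two augmentations\<close>

lemma dhom_append_tuples:
  assumes x: "x \<in> tuples G (Suc k)" and y: "y \<in> tuples G (Suc l)" and m: "Suc m = Suc k + Suc l"
  shows "dhom G (Suc m) w (append_tuples (Suc (Suc m)) (Suc k) x y)
    = (\<Sum>i\<le>Suc k. alt i (w (append_tuples (Suc m) k (face k i x) y)))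
      + alt k (\<Sum>j\<le>Suc l. alt j (w (append_tuples (Suc m) (Suc k) x (face l j y))))"
proof -
  let ?z = "append_tuples (Suc (Suc m)) (Suc k) x y"
  have "?z \<in> tuples G (Suc (Suc m))"
    using m by (intro append_tuples_in_tuples[OF _ x y]) simp
  then have "dhom G (Suc m) w ?z = (\<Sum>i\<le>Suc k + Suc (Suc l). alt i (w (face (Suc m) i ?z)))"
    using m by (simp add: dhom_def)
  also have "\<dots> = (\<Sum>i\<le>Suc k. alt i (w (face (Suc m) i ?z)))
      + (\<Sum>j\<le>Suc l. alt (Suc (Suc k) + j) (w (face (Suc m) (Suc (Suc k) + j) ?z)))"
    by (rule sum_atMost_add_Suc)
  also have "(\<Sum>i\<le>Suc k. alt i (w (face (Suc m) i ?z)))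
      = (\<Sum>i\<le>Suc k. alt i (w (append_tuples (Suc m) k (face k i x) y)))"
    by (rule sum.cong) (simp_all add: face_append_tuples_left)
  also have "(\<Sum>j\<le>Suc l. alt (Suc (Suc k) + j) (w (face (Suc m) (Suc (Suc k) + j) ?z)))
      = (\<Sum>j\<le>Suc l. alt k (alt j (w (append_tuples (Suc m) (Suc k) x (face l j y)))))"
  proof (rule sum.cong)
    fix j
    have "face (Suc m) (Suc (Suc k) + j) ?z = append_tuples (Suc m) (Suc k) x (face l j y)"
      using face_append_tuples_right[of "Suc m" "Suc k" l j x y] m by simp
    moreover have "alt (Suc (Suc k) + j) (w z) = alt k (alt j (w z))" for z
      by (simp add: alt_def)
    ultimately show "alt (Suc (Suc k) + j) (w (face (Suc m) (Suc (Suc k) + j) ?z))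
        = alt k (alt j (w (append_tuples (Suc m) (Suc k) x (face l j y))))"
      by simp
  qed simp
  also have "\<dots> = alt k (\<Sum>j\<le>Suc l. alt j (w (append_tuples (Suc m) (Suc k) x (face l j y))))"
    by (simp only: alt_sum)
  finally show ?thesis .
qed

primrec triangular :: "nat \<Rightarrow> nat" where
  "triangular 0 = 0"
| "triangular (Suc k) = triangular k + Suc k"

lemma alt_triangular_Suc: "alt (triangular (Suc k)) (alt (Suc k) v) = alt (triangular k) v"
  by (simp add: alt_alt alt_def)

context top_G_module
begin

definition join_cochain :: "nat \<Rightarrow> ((nat \<Rightarrow> 'g) \<Rightarrow> 'a) \<Rightarrow> nat \<Rightarrow> (nat \<Rightarrow> 'g) \<times> (nat \<Rightarrow> 'g) \<Rightarrow> 'a" where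
  "join_cochain m w k = (\<lambda>(x, y). if (x, y) \<in> tuples G k \<times> tuples G (m - k)
      then w (append_tuples (Suc m) k x y) else 0)"

lemma join_cochain_in_Alc_eqv:
  assumes k: "k \<le> m" and w: "w \<in> C_c (Suc m)"
  shows "join_cochain m w k \<in> E k (m - k)"
proof -
  have m: "Suc m = k + Suc (m - k)"
    using k by arith
  have "continuous_map (tuple_top TG (Suc m)) TA w"
    using w by (simp add: Cc_def)
  then have "continuous_map (Alc_top k (m - k) (carrier G)) TA (\<lambda>t. w (append_tuples (Suc m) k (fst t) (snd t)))"
    using continuous_map_compose[OF continuous_map_append_tuples[OF m continuous_map_Alc_top_fst
          continuous_map_Alc_top_snd]]
    by (simp add: o_def)
  then have "continuous_map (Alc_top k (m - k) (carrier G)) TA (join_cochain m w k)"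
    by (rule continuous_map_eq) (auto dest: Gamma_tuplesD simp: topspace_Alc_top join_cochain_def)
  moreover have "equivariant2 G act k (m - k) (join_cochain m w k)"
  proof (clarsimp simp: equivariant2_def)
    fix g x y assume g: "g \<in> carrier G" and x: "x \<in> tuples G k" and y: "y \<in> tuples G (m - k)"
    have "append_tuples (Suc m) k x y \<in> tuples G (Suc m)"
      by (rule append_tuples_in_tuples[OF m x y])
    then show "join_cochain m w k (translate G k g x, translate G (m - k) g y) = act g (join_cochain m w k (x, y))"
      using w g x y by (simp add: join_cochain_def translate_in_tuples append_tuples_translate[OF m]
          Cc_def equivariant_iff_translate)
  qed
  ultimately show ?thesis
    using identity_nbhd_carrier by (auto simp: Alc_eqv_iff join_cochain_def)
qed

lemma dV_join_cochain_0:
  assumes dw: "dhom G (Suc m) w = (\<lambda>_. 0)"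
  shows "dV G 0 m (join_cochain m w 0) = row_aug G (Suc m) w"
proof
  fix t :: "(nat \<Rightarrow> 'g) \<times> (nat \<Rightarrow> 'g)"
  obtain x y where t: "t = (x, y)"
    by fastforce
  show "dV G 0 m (join_cochain m w 0) t = row_aug G (Suc m) w t"
  proof (cases "x \<in> tuples G 0 \<and> y \<in> tuples G (Suc m)")
    case True
    have "append_tuples (Suc (Suc m)) 0 x y \<in> tuples G (Suc (Suc m))"
      using True append_tuples_in_tuples[where n = "Suc (Suc m)" and k = 0 and l = "Suc m" and G = G] by simp
    moreover have "face (Suc m) 0 (append_tuples (Suc (Suc m)) 0 x y) = y"
      using True by (auto intro: face_0_append_tuples)
    moreover have "face (Suc m) (Suc j) (append_tuples (Suc (Suc m)) 0 x y) = append_tuples (Suc m) 0 x (face m j y)" for j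
      using face_append_tuples_right[of "Suc m" 0 m j x y] by simp
    ultimately have "dhom G (Suc m) w (append_tuples (Suc (Suc m)) 0 x y)
        = w y + (\<Sum>j\<le>Suc m. alt (Suc j) (w (append_tuples (Suc m) 0 x (face m j y))))"
      by (simp add: dhom_def sum.atMost_Suc_shift del: sum.atMost_Suc)
    also have "\<dots> = w y - dV G 0 m (join_cochain m w 0) t"
      using True by (simp add: t dV_def join_cochain_def face_in_tuples alt_Suc sum_negf del: sum.atMost_Suc)
    finally show ?thesis
      using True dw by (simp add: t row_aug_def)
  next
    case False
    then show ?thesis
      by (auto simp: t dV_def row_aug_def)
  qed
qed

lemma dV_join_cochain_Suc:
  assumes k: "k < m" and dw: "dhom G (Suc m) w = (\<lambda>_. 0)"
  shows "dV G (Suc k) (m - Suc k) (join_cochain m w (Suc k))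
    = (\<lambda>t. alt (Suc k) (dH G k (m - k) (join_cochain m w k) t))"
proof
  fix t :: "(nat \<Rightarrow> 'g) \<times> (nat \<Rightarrow> 'g)"
  obtain x y where t: "t = (x, y)"
    by fastforce
  define l where "l = m - Suc k"
  have l: "m - k = Suc l" "Suc m = Suc k + Suc l"
    using k by (auto simp: l_def)
  show "dV G (Suc k) (m - Suc k) (join_cochain m w (Suc k)) t = alt (Suc k) (dH G k (m - k) (join_cochain m w k) t)"
  proof (cases "x \<in> tuples G (Suc k) \<and> y \<in> tuples G (Suc l)")
    case True
    have "dH G k (m - k) (join_cochain m w k) t = (\<Sum>i\<le>Suc k. alt i (w (append_tuples (Suc m) k (face k i x) y)))"
      using True l(1) by (simp add: t dH_def join_cochain_def face_in_tuples del: sum.atMost_Suc)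
    moreover have "dV G (Suc k) (m - Suc k) (join_cochain m w (Suc k)) t
        = (\<Sum>j\<le>Suc l. alt j (w (append_tuples (Suc m) (Suc k) x (face l j y))))"
      using True by (simp add: t dV_def join_cochain_def face_in_tuples flip: l_def del: sum.atMost_Suc)
    moreover have "dhom G (Suc m) w (append_tuples (Suc (Suc m)) (Suc k) x y) = 0"
      using dw by simp
    ultimately have "dH G k (m - k) (join_cochain m w k) t
        + alt k (dV G (Suc k) (m - Suc k) (join_cochain m w (Suc k)) t) = 0"
      using dhom_append_tuples[OF _ _ l(2), of x G y w] True by simp
    then show ?thesis
      by (metis add_eq_0_iff2 alt_Suc alt_alt_self alt_minus)
  next
    case False
    then show ?thesis
      using l(1) by (auto simp: t dV_def dH_def simp flip: l_def)
  qed
qed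

lemma dH_join_cochain_last:
  assumes dw: "dhom G (Suc m) w = (\<lambda>_. 0)"
  shows "dH G m 0 (join_cochain m w m) = aug G (Suc m) (\<lambda>x. alt (Suc m) (w x))"
proof
  fix t :: "(nat \<Rightarrow> 'g) \<times> (nat \<Rightarrow> 'g)"
  obtain x y where t: "t = (x, y)"
    by fastforce
  show "dH G m 0 (join_cochain m w m) t = aug G (Suc m) (\<lambda>x. alt (Suc m) (w x)) t"
  proof (cases "x \<in> tuples G (Suc m) \<and> y \<in> tuples G 0")
    case True
    have "append_tuples (Suc (Suc m)) (Suc m) x y \<in> tuples G (Suc (Suc m))"
      using True append_tuples_in_tuples[where n = "Suc (Suc m)" and k = "Suc m" and l = 0 and G = G] by simp
    moreover have "face (Suc m) (Suc (Suc m)) (append_tuples (Suc (Suc m)) (Suc m) x y) = x"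
      using True by (auto intro: face_last_append_tuples)
    ultimately have "dhom G (Suc m) w (append_tuples (Suc (Suc m)) (Suc m) x y)
        = (\<Sum>i\<le>Suc m. alt i (w (append_tuples (Suc m) m (face m i x) y))) + alt (Suc (Suc m)) (w x)"
      by (simp add: dhom_def face_append_tuples_left)
    also have "(\<Sum>i\<le>Suc m. alt i (w (append_tuples (Suc m) m (face m i x) y))) = dH G m 0 (join_cochain m w m) t"
      using True by (simp add: t dH_def join_cochain_def face_in_tuples del: sum.atMost_Suc)
    finally show ?thesis
      using True dw by (simp add: t aug_def alt_Suc eq_neg_iff_add_eq_0)
  next
    case False
    then show ?thesis
      by (auto simp: t dH_def aug_def)
  qed
qed

end

context top_G_module_exact_columns
begin

sublocale dc: augmented_double_complex E "dH G" "dV G" C_lc C_c "dhom G" "row_aug G" "aug G"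
proof unfold_locales
  fix F p q assume "F \<in> E p q"
  then show "dH G p q F \<in> E (Suc p) q" and "dV G p q F \<in> E p (Suc q)"
    by (simp_all add: dH_in_Alc_eqv dV_in_Alc_eqv)
next
  fix u q assume "u \<in> C_lc q" "row_aug G q u = (\<lambda>_. 0)"
  then show "u = (\<lambda>_. 0)"
    using row_aug_inj[OF is_monoid] by (auto simp: Clc_def)
next
  fix f p assume "f \<in> C_c p" "aug G p f = (\<lambda>_. 0)"
  then show "f = (\<lambda>_. 0)"
    using aug_inj[OF is_monoid] by (auto simp: Cc_def)
qed (simp_all add: additive_subgroup_Alc_eqv additive_subgroup_Clc additive_subgroup_Cc
    diff_preserving_dH diff_preserving_dV diff_preserving_row_aug diff_preserving_aug
    dhom_in_Clc dhom_in_Cc row_aug_in_Alc_eqv aug_in_Alc_eqv dH_dH dV_dV dV_dH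
    dV_row_aug dH_row_aug dH_aug dV_aug row_exact_0 row_exact col_exact_0 col_exact)

text \<open>The signs (-1)^(k(k+1)/2) turn the relations of dV_join_cochain_Suc into those of a
  zigzag.\<close>

lemma zigzag_join_cochain:
  assumes w: "w \<in> C_c (Suc m)" and dw: "dhom G (Suc m) w = (\<lambda>_. 0)"
  shows "dc.zigzag m w (\<lambda>t. alt (triangular m + Suc m) (w t)) (\<lambda>k t. alt (triangular k) (join_cochain m w k t))"
  unfolding dc.zigzag_def dc.staircase_def
proof (intro conjI allI impI)
  show "(\<lambda>t. alt (triangular k) (join_cochain m w k t)) \<in> E k (m - k)" if "k \<le> m" for k
    using that w by (intro additive_subgroup_alt[OF additive_subgroup_Alc_eqv] join_cochain_in_Alc_eqv)
  show "row_aug G (Suc m) w = dV G 0 m (\<lambda>t. alt (triangular 0) (join_cochain m w 0 t))"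
    using dV_join_cochain_0[OF dw] by simp
  show "dV G (Suc k) (m - Suc k) (\<lambda>t. alt (triangular (Suc k)) (join_cochain m w (Suc k) t))
      = dH G k (m - k) (\<lambda>t. alt (triangular k) (join_cochain m w k t))" if "k < m" for k
    using that dw by (simp add: dV_join_cochain_Suc diff_preserving_alt diff_preserving_dV diff_preserving_dH
        alt_triangular_Suc del: triangular.simps)
  show "aug G (Suc m) (\<lambda>t. alt (triangular m + Suc m) (w t)) = dH G m 0 (\<lambda>t. alt (triangular m) (join_cochain m w m t))"
    using dw by (simp add: dH_join_cochain_last diff_preserving_alt diff_preserving_dH diff_preserving_aug alt_alt)
qed

lemma Cc_coboundary_if_Clc_coboundary:
  assumes z: "z \<in> cocycles G C_c n" and bz: "z \<in> coboundaries G C_lc n"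
  shows "z \<in> coboundaries G C_c n"
proof (cases n)
  case 0
  then show ?thesis
    using bz by (simp add: coboundaries_def)
next
  case (Suc m)
  define s where "s = triangular m + Suc m"
  obtain u where u: "u \<in> C_lc m" "z = dhom G m u"
    using bz Suc by (auto simp: coboundaries_def)
  have zC: "z \<in> C_c (Suc m)" "dhom G (Suc m) z = (\<lambda>_. 0)"
    using z Suc by (simp_all add: cocycles_def)
  obtain c where c: "c \<in> C_c m" "(\<lambda>t. alt s (z t)) = dhom G m c"
    using dc.zigzag_L_coboundary_imp_C_coboundary[OF zigzag_join_cochain[OF zC] _ u]
      additive_subgroup_alt[OF additive_subgroup_Cc zC(1)] unfolding s_def by blast
  have "z = dhom G m (\<lambda>t. alt s (c t))"
    using c(2) by (simp add: diff_preserving_alt[OF diff_preserving_dhom] flip: c(2))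
  then show ?thesis
    using Suc additive_subgroup_alt[OF additive_subgroup_Cc c(1)] by (auto simp: coboundaries_def)
qed

lemma Clc_cocycle_cohomologous_to_Cc_cocycle:
  assumes z: "z \<in> cocycles G C_lc n"
  shows "\<exists>w\<in>cocycles G C_c n. (\<lambda>x. z x - w x) \<in> coboundaries G C_lc n"
proof (cases n)
  case 0
  then have "z \<in> cocycles G C_c n"
    using z Clc_0_subset_Cc_0 by (auto simp: cocycles_def)
  then show ?thesis
    using 0 by (auto simp: coboundaries_def intro!: bexI[of _ z])
next
  case (Suc m)
  define s where "s = triangular m + Suc m"
  have zC: "z \<in> C_lc (Suc m)" "dhom G (Suc m) z = (\<lambda>_. 0)"
    using z Suc by (simp_all add: cocycles_def)
  obtain w a where w: "w \<in> C_c (Suc m)" "dhom G (Suc m) w = (\<lambda>_. 0)" "dc.zigzag m z w a"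
    using dc.exists_zigzag[OF zC] by blast
  \<comment> \<open>a links z to w and the join cochains link w to alt s w, so their difference links
    alt s z - w to 0\<close>
  have "dc.zigzag m (\<lambda>t. alt s (z t) - w t) (\<lambda>t. alt s (w t) - alt s (w t))
      (\<lambda>k t. alt s (a k t) - alt (triangular k) (join_cochain m w k t))"
    unfolding s_def by (rule dc.zigzag_diff[OF dc.zigzag_alt[OF w(3)] zigzag_join_cochain[OF w(1,2)]])
  moreover have "(\<lambda>t. alt s (w t) - alt s (w t)) = dhom G m (\<lambda>_. 0)"
    by (simp add: diff_preserving_zero[OF diff_preserving_dhom])
  moreover have "(\<lambda>t. alt s (z t) - w t) \<in> C_lc (Suc m)"
    using additive_subgroup_diff[OF additive_subgroup_Clc additive_subgroup_alt[OF additive_subgroup_Clc zC(1)]]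
      Cc_subset_Clc w(1) by blast
  ultimately obtain u where u: "u \<in> C_lc m" "(\<lambda>t. alt s (z t) - w t) = dhom G m u"
    using dc.zigzag_C_coboundary_imp_L_coboundary additive_subgroup_zero[OF additive_subgroup_Cc] by blast
  have "(\<lambda>x. z x - alt s (w x)) = dhom G m (\<lambda>t. alt s (u t))"
    by (simp add: fun_eq_iff diff_preserving_alt[OF diff_preserving_dhom] alt_diff flip: u(2))
  then have "(\<lambda>x. z x - alt s (w x)) \<in> coboundaries G C_lc n"
    using Suc additive_subgroup_alt[OF additive_subgroup_Clc u(1)] by (auto simp: coboundaries_def)
  moreover have "(\<lambda>x. alt s (w x)) \<in> cocycles G C_c n"
    using Suc additive_subgroup_alt[OF additive_subgroup_Cc w(1)] w(2)
    by (simp add: cocycles_def diff_preserving_alt[OF diff_preserving_dhom])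
  ultimately show ?thesis
    by (rule bexI)
qed

end

theorem mainTheorem6:
  fixes G :: "('g, 'b) monoid_scheme" and TG :: "'g topology"
    and TA :: "'a::ab_group_add topology" and act :: "'g \<Rightarrow> 'a \<Rightarrow> 'a"
  assumes "topological_G_module G TG TA act"
    and "\<forall>p. column_exact G TG TA p"
  shows "\<forall>n. bij_betw (induced_map G (Cc G TG TA act) (Clc G TG TA act) n)
                     (cohom G (Cc G TG TA act) n) (cohom G (Clc G TG TA act) n)"
proof
  fix n
  interpret top_G_module_exact_columns G TG TA act
    using assms by (simp add: top_G_module_exact_columns_def top_G_module_def top_G_module_exact_columns_axioms_def)
  show "bij_betw (induced_map G C_c C_lc n) (cohom G C_c n) (cohom G C_lc n)"
    by (rule bij_betw_induced_map[OF Cc_subset_Clc additive_subgroup_Cc additive_subgroup_Clc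
          Cc_coboundary_if_Clc_coboundary Clc_cocycle_cohomologous_to_Cc_cocycle])
qed

end
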